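(* Consider the problem $\min_{w\in\mathbb{R}^d}\big[\frac1n\sum_{i=1}^n\phi_i(x_i^\top w)+\sigma\|w\|_1\big]$ with optimal solution $w^*$, and let $B\ge\|w^*\|_2$ and $R\ge\max_i\|x_i\|_2$. The number of iterations required by the Prox-SDCA procedure described in the context (run with $g(w)=\frac12\|w\|_2^2+\frac{\sigma}{\lambda}\|w\|_1$ and $\lambda=\epsilon/B^2$) to solve this problem to accuracy $\epsilon$ is $\tilde{O}\big(n + \frac{R^2 B^2}{\epsilon\gamma}\big)$ if every $\phi_i$ is $(1/\gamma)$-smooth, and $\tilde{O}\big(n + \frac{L^2 R^2 B^2}{\epsilon^2}\big)$ if every $\phi_i$ is $L$-Lipschitz.
   Context: Here $x_1,\dots,x_n\in\mathbb{R}^d$, $\sigma>0$, and $\phi_i:\mathbb{R}\to\mathbb{R}$ are convex with $\phi_i\ge0$ and $\frac1n\sum_i\phi_i(0)\le1$. $\phi_i$ is $L$-Lipschitz if $|\phi_i(a)-\phi_i(b)|\le L|a-b|$, and $(1/\gamma)$-smooth if differentiable with $(1/\gamma)$-Lipschitz derivative. $\tilde O(\cdot)$ hides logarithmic factors. A point $\hat w$ solves the problem to accuracy $\epsilon$ if its objective value is within $\epsilon$ of the optimum. Prox-SDCA here: with $X_i=x_i$ ($k=1$), $g(w)=\frac12\|w\|_2^2+\frac\sigma\lambda\|w\|_1$, $P(w)=\frac1n\sum_i\phi_i(x_i^\top w)+\lambda g(w)$, $D(\alpha)=\frac1n\sum_i-\phi_i^*(-\alpha_i)-\lambda g^*(\frac{1}{\lambda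 n}\sum_ix_i\alpha_i)$ for $\alpha\in\mathbb{R}^n$ (where $f^*$ denotes the convex conjugate), norms $\|\cdot\|_D=|\cdot|$ on $\mathbb{R}$ and $\|\cdot\|_{D'}=\|\cdot\|_2$ on $\mathbb{R}^d$, and $\nabla_j g^*(v)=\mathrm{sign}(v_j)\,[|v_j|-\sigma/\lambda]_+$. Set $\alpha^{(0)}=0$, $v^{(0)}=0$, $w^{(0)}=\nabla g^*(0)$; for $t=1,\dots,T$ pick $i$ uniformly at random, choose $\Delta\alpha_i\in\mathbb{R}$ by, e.g., Option I: $\Delta\alpha_i\in\arg\max_\Delta[-\phi_i^*(-(\alpha_i^{(t-1)}+\Delta))-w^{(t-1)\top}x_i\Delta-\frac{1}{2\lambda n}\|x_i\Delta\|_2^2]$, or Option II/III/IV/V: take $u$ with $-u\in\partial\phi_i(x_i^\top w^{(t-1)})$, $z=u-\alpha_i^{(t-1)}$, $\Delta\alpha_i=sz$ with $s\in[0,1]$ maximizing $-\phi_i^*(-(\alpha_i^{(t-1)}+sz))-s\,w^{(t-1)\top}x_iz-\frac{s^2}{2\lambda n}\|x_iz\|_2^2$ (II), or $s=\frac{\phi_i(x_i^\top w^{(t-1)})+\phi_i^*(-\alpha_i^{(t-1)})+w^{(t-1)\top}x_i\alpha_i^{(t-1)}+\frac\gamma2 z^2}{z^2(\gamma+\|x_i\|_2^2/(\lambda n))}$ (III), or the same with $\|x_i\|_2^2$ replaced by $R^2$ (IV), or, for smooth losses, $\Delta\alpha_i=\frac{\lambda n\gamma}{R^2+\lambda n\gamma}(-\phi_i'(x_i^\top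 w^{(t-1)})-\alpha_i^{(t-1)})$ (V); then update $\alpha_i^{(t)}=\alpha_i^{(t-1)}+\Delta\alpha_i$, $v^{(t)}=v^{(t-1)}+(\lambda n)^{-1}x_i\Delta\alpha_i$, $w^{(t)}=\nabla g^*(v^{(t)})$. Output is $w^{(T)}$, an average of iterates $w^{(t-1)}$ over $t\in\{T_0+1,\dots,T\}$, or a random such iterate. *)

theory Defs
  imports "HOL-Analysis.Analysis"
begin

text \<open>Vectors in R^d are represented as functions nat => real; only the
coordinates 0..d-1 matter (all quantities below only look at those).\<close>

definition dotp :: "nat \<Rightarrow> (nat \<Rightarrow> real) \<Rightarrow> (nat \<Rightarrow> real) \<Rightarrow> real" where
  "dotp d a b = (\<Sum>j<d. a j * b j)"

definition norm2 :: "nat \<Rightarrow> (nat \<Rightarrow> real) \<Rightarrow> real" where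
  "norm2 d a = sqrt (\<Sum>j<d. (a j)^2)"

definition norm1 :: "nat \<Rightarrow> (nat \<Rightarrow> real) \<Rightarrow> real" where
  "norm1 d a = (\<Sum>j<d. \<bar>a j\<bar>)"

definition primal0 :: "nat \<Rightarrow> nat \<Rightarrow> (nat \<Rightarrow> real \<Rightarrow> real) \<Rightarrow> (nat \<Rightarrow> nat \<Rightarrow> real)
    \<Rightarrow> real \<Rightarrow> (nat \<Rightarrow> real) \<Rightarrow> real" where
  "primal0 n d \<phi> x \<sigma> w = (\<Sum>i<n. \<phi> i (dotp d (x i) w)) / real n + \<sigma> * norm1 d w"

definition fconj :: "(real \<Rightarrow> real) \<Rightarrow> real \<Rightarrow> ereal" where
  "fconj f u = (SUP a. ereal (u * a - f a))"

definition lipschitz_loss :: "real \<Rightarrow> (real \<Rightarrow> real) \<Rightarrow> bool" where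
  "lipschitz_loss L f \<longleftrightarrow> (\<forall>a b. \<bar>f a - f b\<bar> \<le> L * \<bar>a - b\<bar>)"

definition smooth_loss :: "real \<Rightarrow> (real \<Rightarrow> real) \<Rightarrow> bool" where
  "smooth_loss \<gamma> f \<longleftrightarrow> (\<forall>a. f differentiable (at a)) \<and>
     (\<forall>a b. \<bar>deriv f a - deriv f b\<bar> \<le> (1 / \<gamma>) * \<bar>a - b\<bar>)"

definition is_subgrad :: "(real \<Rightarrow> real) \<Rightarrow> real \<Rightarrow> real \<Rightarrow> bool" where
  "is_subgrad f a g \<longleftrightarrow> (\<forall>b. f a + g * (b - a) \<le> f b)"

text \<open>v = (lambda n)^{-1} sum_i x_i alpha_i and w = grad g^*(v) (soft thresholding).\<close>
definition vdual :: "nat \<Rightarrow> real \<Rightarrow> (nat \<Rightarrow> nat \<Rightarrow> real) \<Rightarrow> (nat \<Rightarrow> real) \<Rightarrow> nat \<Rightarrow> real" where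
  "vdual n lam x \<alpha> = (\<lambda>j. (\<Sum>i<n. \<alpha> i * x i j) / (lam * real n))"

definition gradgconj :: "real \<Rightarrow> real \<Rightarrow> (nat \<Rightarrow> real) \<Rightarrow> nat \<Rightarrow> real" where
  "gradgconj lam \<sigma> v = (\<lambda>j. sgn (v j) * max 0 (\<bar>v j\<bar> - \<sigma> / lam))"

definition wof :: "nat \<Rightarrow> real \<Rightarrow> real \<Rightarrow> (nat \<Rightarrow> nat \<Rightarrow> real) \<Rightarrow> (nat \<Rightarrow> real) \<Rightarrow> nat \<Rightarrow> real" where
  "wof n lam \<sigma> x \<alpha> = gradgconj lam \<sigma> (vdual n lam x \<alpha>)"

text \<open>Dual objective along coordinate i (Option I / II objective).\<close>
definition coord_obj :: "(nat \<Rightarrow> real \<Rightarrow> real) \<Rightarrow> nat \<Rightarrow> nat \<Rightarrow> real \<Rightarrow> (nat \<Rightarrow> nat \<Rightarrow> real)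
    \<Rightarrow> (nat \<Rightarrow> real) \<Rightarrow> nat \<Rightarrow> (nat \<Rightarrow> real) \<Rightarrow> real \<Rightarrow> ereal" where
  "coord_obj \<phi> d n lam x w i \<alpha> \<Delta> =
     - fconj (\<phi> i) (- (\<alpha> i + \<Delta>))
     - ereal (dotp d w (x i) * \<Delta> + (norm2 d (x i))^2 * \<Delta>^2 / (2 * lam * real n))"

text \<open>Option III/IV step size (with the cap min 1 of the original paper);
  c = ||x_i||^2 for Option III and c = R^2 for Option IV.\<close>
definition s_opt :: "(nat \<Rightarrow> real \<Rightarrow> real) \<Rightarrow> nat \<Rightarrow> real \<Rightarrow> real \<Rightarrow> real \<Rightarrow> real
    \<Rightarrow> (nat \<Rightarrow> real) \<Rightarrow> nat \<Rightarrow> real \<Rightarrow> real" where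
  "s_opt \<phi> n lam \<gamma> c a \<alpha> i z =
     min 1 ((\<phi> i a + real_of_ereal (fconj (\<phi> i) (- \<alpha> i)) + a * \<alpha> i + \<gamma> / 2 * z^2)
            / (z^2 * (\<gamma> + c / (lam * real n))))"

text \<open>Admissible coordinate increments Delta alpha_i (Options I--IV, and V if allowV).\<close>
definition step_ok :: "(nat \<Rightarrow> real \<Rightarrow> real) \<Rightarrow> nat \<Rightarrow> nat \<Rightarrow> real \<Rightarrow> real
    \<Rightarrow> (nat \<Rightarrow> nat \<Rightarrow> real) \<Rightarrow> real \<Rightarrow> real \<Rightarrow> bool \<Rightarrow> (nat \<Rightarrow> real) \<Rightarrow> nat \<Rightarrow> real \<Rightarrow> bool" where
  "step_ok \<phi> d n lam \<sigma> x R \<gamma> allowV \<alpha> i \<Delta> \<longleftrightarrow>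
     (let w = wof n lam \<sigma> x \<alpha>; a = dotp d (x i) w; F = coord_obj \<phi> d n lam x w i \<alpha> in
       (\<forall>\<Delta>'. F \<Delta>' \<le> F \<Delta>)
     \<or> (\<exists>u. is_subgrad (\<phi> i) a (- u) \<and>
          (let z = u - \<alpha> i in
             (\<exists>s\<in>{0..1}. \<Delta> = s * z \<and> (\<forall>s'\<in>{0..1}. F (s' * z) \<le> F (s * z)))
           \<or> \<Delta> = s_opt \<phi> n lam \<gamma> ((norm2 d (x i))^2) a \<alpha> i z * z
           \<or> \<Delta> = s_opt \<phi> n lam \<gamma> (R^2) a \<alpha> i z * z))
     \<or> (allowV \<and> \<Delta> = lam * real n * \<gamma> / (R^2 + lam * real n * \<gamma>) * (- deriv (\<phi> i) a - \<alpha> i)))"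

text \<open>Dual iterates alpha^(t) driven by the index sequence is (index chosen at step t+1
  is "is t") and an update rule upd.\<close>
fun alphas :: "((nat \<Rightarrow> real) \<Rightarrow> nat \<Rightarrow> real) \<Rightarrow> (nat \<Rightarrow> nat) \<Rightarrow> nat \<Rightarrow> nat \<Rightarrow> real" where
  "alphas upd is 0 = (\<lambda>_. 0)"
| "alphas upd is (Suc t) = (let \<alpha> = alphas upd is t; i = is t in \<alpha>(i := \<alpha> i + upd \<alpha> i))"

text \<open>Expectation over i_1..i_T drawn independently uniformly from {0..n-1}.\<close>
definition expect :: "nat \<Rightarrow> nat \<Rightarrow> ((nat \<Rightarrow> nat) \<Rightarrow> real) \<Rightarrow> real" where
  "expect n T F = (\<Sum>is\<in>PiE {..<T} (\<lambda>_. {..<n}). F is) / real n ^ T"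

text \<open>Averaged output: mean of w^(t-1) over t in {T0+1..T}.\<close>
definition wavg :: "nat \<Rightarrow> real \<Rightarrow> real \<Rightarrow> (nat \<Rightarrow> nat \<Rightarrow> real) \<Rightarrow> ((nat \<Rightarrow> real) \<Rightarrow> nat \<Rightarrow> real)
    \<Rightarrow> (nat \<Rightarrow> nat) \<Rightarrow> nat \<Rightarrow> nat \<Rightarrow> nat \<Rightarrow> real" where
  "wavg n lam \<sigma> x upd is T0 T =
     (\<lambda>j. (\<Sum>t\<in>{T0..<T}. wof n lam \<sigma> x (alphas upd is t) j) / real (T - T0))"

end

theory Submission
  imports Defs
begin

text \<open>Prox-SDCA is randomized coordinate ascent on the dual of
  \<open>P(w) = (1/n) \<Sum> \<phi>\<^sub>i(x\<^sub>i\<^sup>T w) + \<lambda> g(w)\<close> with \<open>g(w) = \<parallel>w\<parallel>\<^sup>2/2 + (\<sigma>/\<lambda>) \<parallel>w\<parallel>\<^sub>1\<close>.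
  Every admissible update (Options I--V) gains at least as much dual value as moving \<open>\<alpha>\<^sub>i\<close> a
  fraction \<open>s\<close> of the way towards \<open>u\<close> with \<open>-u \<in> \<partial>\<phi>\<^sub>i(x\<^sub>i\<^sup>T w)\<close>; strong convexity of \<open>\<phi>\<^sub>i\<^sup>*\<close> and
  smoothness of \<open>g\<^sup>*\<close> bound that gain below by \<open>s\<close> times the duality gap of coordinate \<open>i\<close>, minus
  \<open>s\<^sup>2 R\<^sup>2 (u - \<alpha>\<^sub>i)\<^sup>2 / (2\<lambda>n)\<close>, plus \<open>\<gamma> s (1 - s) (u - \<alpha>\<^sub>i)\<^sup>2 / 2\<close> for \<open>(1/\<gamma>)\<close>-smooth losses.
  Averaged over the random coordinate, the expected dual suboptimality therefore contracts by
  \<open>1 - s/n\<close> per step up to an additive error.  For smooth losses \<open>s = \<lambda>n\<gamma>/(R\<^sup>2 + \<lambda>n\<gamma>)\<close> cancels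
  the quadratic terms, giving linear convergence with \<open>n/s = n + R\<^sup>2/(\<lambda>\<gamma>)\<close>; for \<open>L\<close>-Lipschitz
  losses \<open>\<bar>u - \<alpha>\<^sub>i\<bar> \<le> 2L\<close> bounds the error, and averaging the iterates of the second half of
  the run controls the gap.  With \<open>\<lambda> = \<epsilon>/B\<^sup>2\<close> the regularizer costs at most \<open>\<epsilon>/2\<close> against any
  \<open>w\<close> with \<open>\<parallel>w\<parallel> \<le> B\<close>.\<close>

section \<open>Convex conjugates of real functions\<close>

definition fconj_real :: "(real \<Rightarrow> real) \<Rightarrow> real \<Rightarrow> real" where
  "fconj_real f u = real_of_ereal (fconj f u)"

lemma fconj_ge: "ereal (u * a - f a) \<le> fconj f u"
  unfolding fconj_def by (rule SUP_upper) auto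

lemma fconj_neq_minf: "fconj f u \<noteq> -\<infinity>"
  using fconj_ge[of u 0 f] by auto

lemma fconj_eq_ereal: "fconj f u \<noteq> \<infinity> \<Longrightarrow> fconj f u = ereal (fconj_real f u)"
  unfolding fconj_real_def using fconj_neq_minf[of f u] by (cases "fconj f u") auto

lemma fenchel_young: "fconj f u \<noteq> \<infinity> \<Longrightarrow> u * a - f a \<le> fconj_real f u"
  using fconj_ge[of u a f] fconj_eq_ereal[of f u] by auto

lemma fconj_le: "(\<And>a. u * a - f a \<le> M) \<Longrightarrow> fconj f u \<le> ereal M"
  unfolding fconj_def by (rule SUP_least) auto

lemma fconj_subgrad:
  assumes "is_subgrad f a g"
  shows "fconj f g = ereal (g * a - f a)"
proof (rule antisym)
  show "fconj f g \<le> ereal (g * a - f a)"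
  proof (rule fconj_le)
    fix b
    have "f a + g * (b - a) \<le> f b" using assms unfolding is_subgrad_def by blast
    then show "g * b - f b \<le> g * a - f a" by (simp add: algebra_simps)
  qed
qed (rule fconj_ge)

lemma fconj_real_subgrad: "is_subgrad f a g \<Longrightarrow> fconj_real f g = g * a - f a"
  using fconj_subgrad unfolding fconj_real_def by simp

lemma convex_deriv_subgrad:
  assumes "convex_on UNIV f" "f differentiable (at a)"
  shows "is_subgrad f a (deriv f a)"
  unfolding is_subgrad_def
proof
  fix b
  have "DERIV f a :> deriv f a" using assms DERIV_deriv_iff_real_differentiable by blast
  then have "f b - f a \<ge> deriv f a * (b - a)"
    by (intro convex_on_imp_above_tangent[OF assms(1)]) auto
  then show "f a + deriv f a * (b - a) \<le> f b" by simp
qed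

text \<open>A subgradient is the supremum of the slopes of secants ending at \<open>a\<close> from the left.\<close>
lemma convex_has_subgrad:
  fixes f :: "real \<Rightarrow> real"
  assumes cv: "convex_on UNIV f"
  shows "\<exists>g. is_subgrad f a g"
proof -
  define S where "S = {(f a - f b) / (a - b) | b. b < a}"
  have slope: "(f a - f b) / (a - b) \<le> (f c - f a) / (c - a)" if "b < a" "a < c" for b c
  proof -
    have "(f b - f a) / (b - a) \<le> (f b - f c) / (b - c)" "(f b - f c) / (b - c) \<le> (f a - f c) / (a - c)"
      using convex_on_slope_le[OF cv, of b c a] that by auto
    moreover have "(f b - f a) / (b - a) = (f a - f b) / (a - b)" "(f a - f c) / (a - c) = (f c - f a) / (c - a)"
      by (simp_all add: divide_simps) (simp_all add: algebra_simps)
    ultimately show ?thesis by linarith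
  qed
  have ne: "S \<noteq> {}" unfolding S_def by (auto intro!: exI[of _ "a - 1"])
  have bdd: "bdd_above S" unfolding S_def bdd_above_def
    using slope[of _ "a + 1"] by (intro exI[of _ "(f (a + 1) - f a) / ((a + 1) - a)"]) auto
  show ?thesis unfolding is_subgrad_def
  proof (intro exI allI)
    fix b
    show "f a + Sup S * (b - a) \<le> f b"
    proof (cases b a rule: linorder_cases)
      case less
      then have "(f a - f b) / (a - b) \<le> Sup S" using bdd by (intro cSup_upper) (auto simp: S_def)
      then show ?thesis using less by (simp add: divide_simps algebra_simps)
    next
      case greater
      have "Sup S \<le> (f b - f a) / (b - a)"
        by (rule cSup_least[OF ne]) (use slope greater in \<open>auto simp: S_def\<close>)
      then show ?thesis using greater by (simp add: divide_simps algebra_simps)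
    qed simp
  qed
qed

lemma smooth_loss_upper_quadratic:
  assumes sm: "smooth_loss \<gamma> f" and g: "\<gamma> > 0"
  shows "f y \<le> f x + deriv f x * (y - x) + (y - x)^2 / (2 * \<gamma>)"
proof -
  define h where "h t = f t - deriv f x * t - (t - x)^2 / (2 * \<gamma>)" for t
  define h' where "h' t = deriv f t - deriv f x - (t - x) / \<gamma>" for t
  have dif: "\<And>t. f differentiable (at t)"
    and lip: "\<And>a b. \<bar>deriv f a - deriv f b\<bar> \<le> (1 / \<gamma>) * \<bar>a - b\<bar>"
    using sm unfolding smooth_loss_def by auto
  have D: "DERIV h t :> h' t" for t
  proof -
    have "DERIV f t :> deriv f t" using dif DERIV_deriv_iff_real_differentiable by blast
    then show ?thesis unfolding h_def h'_def using g
      by (auto intro!: derivative_eq_intros simp: field_simps)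
  qed
  have "h y \<le> h x"
  proof (cases y x rule: linorder_cases)
    case less
    then obtain z where z: "y < z" "z < x" "h x - h y = (x - y) * h' z"
      using MVT2[OF less, of h h'] D by blast
    have "deriv f z - deriv f x \<ge> - (1 / \<gamma>) * \<bar>z - x\<bar>" using lip[of z x] by linarith
    then have "h' z \<ge> 0" using z g unfolding h'_def by (simp add: field_simps)
    then have "(x - y) * h' z \<ge> 0" using z by simp
    then show ?thesis using z by linarith
  next
    case greater
    then obtain z where z: "x < z" "z < y" "h y - h x = (y - x) * h' z"
      using MVT2[OF greater, of h h'] D by blast
    have "deriv f z - deriv f x \<le> (1 / \<gamma>) * \<bar>z - x\<bar>" using lip[of z x] by linarith
    then have "h' z \<le> 0" using z g unfolding h'_def by (simp add: field_simps)
    then have "(y - x) * h' z \<le> 0" using z by (simp add: mult_nonneg_nonpos)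
    then show ?thesis using z by linarith
  qed simp
  then show ?thesis unfolding h_def by (simp add: algebra_simps)
qed

lemma lipschitz_loss_nonneg: "lipschitz_loss L f \<Longrightarrow> L \<ge> 0"
  unfolding lipschitz_loss_def by (metis abs_ge_zero abs_one diff_zero mult.right_neutral order_trans)

lemma lipschitz_subgrad_bound:
  assumes lip: "lipschitz_loss L f" and sg: "is_subgrad f a g"
  shows "\<bar>g\<bar> \<le> L"
proof -
  have "f a + g * ((a + sgn g) - a) \<le> f (a + sgn g)" using sg unfolding is_subgrad_def by blast
  moreover have "g * sgn g = \<bar>g\<bar>" by (simp add: abs_if sgn_if)
  ultimately have "\<bar>g\<bar> \<le> f (a + sgn g) - f a" by simp
  also have "\<dots> \<le> L * \<bar>(a + sgn g) - a\<bar>" using lip unfolding lipschitz_loss_def by (metis abs_le_D1)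
  also have "\<dots> \<le> L" using lipschitz_loss_nonneg[OF lip] by (cases "g = 0") (auto simp: abs_sgn_eq)
  finally show ?thesis .
qed

text \<open>Outside \<open>[-L, L]\<close> the conjugate is infinite: along \<open>b = t sgn p\<close> the affine minorant
  \<open>p b - f b \<ge> (\<bar>p\<bar> - L) t - f 0\<close> is unbounded.\<close>
lemma lipschitz_fconj_dom:
  assumes lip: "lipschitz_loss L f" and fin: "fconj f p \<noteq> \<infinity>"
  shows "\<bar>p\<bar> \<le> L"
proof (rule ccontr)
  assume "\<not> \<bar>p\<bar> \<le> L"
  then have pL: "\<bar>p\<bar> - L > 0" by simp
  define t where "t = max 0 ((fconj_real f p + f 0 + 1) / (\<bar>p\<bar> - L))"
  define b where "b = sgn p * t"
  have "(\<bar>p\<bar> - L) * t \<ge> (\<bar>p\<bar> - L) * ((fconj_real f p + f 0 + 1) / (\<bar>p\<bar> - L))"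
    unfolding t_def using pL by (intro mult_left_mono) auto
  then have big: "(\<bar>p\<bar> - L) * t \<ge> fconj_real f p + f 0 + 1" using pL by simp
  have pb: "p * b = \<bar>p\<bar> * t" unfolding b_def t_def by (simp add: abs_if sgn_if)
  have bt: "\<bar>b\<bar> \<le> t" unfolding b_def t_def by (simp add: abs_mult abs_sgn_eq)
  have "f b - f 0 \<le> L * \<bar>b - 0\<bar>" using lip unfolding lipschitz_loss_def by (metis abs_le_D1)
  then have "f b \<le> f 0 + L * t"
    using mult_left_mono[OF bt lipschitz_loss_nonneg[OF lip]] by simp
  moreover have "p * b - f b \<le> fconj_real f p" by (rule fenchel_young[OF fin])
  ultimately show False using pb big by (simp add: algebra_simps)
qed

lemma fconj_real_smooth_lower:
  assumes sm: "smooth_loss \<gamma> f" and g: "\<gamma> > 0" and fin: "fconj f r \<noteq> \<infinity>"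
  shows "r * b - f b + \<gamma> / 2 * (r - deriv f b)^2 \<le> fconj_real f r"
proof -
  define b' where "b' = b + \<gamma> * (r - deriv f b)"
  have "r * b' - f b' \<le> fconj_real f r" by (rule fenchel_young[OF fin])
  moreover have "f b' \<le> f b + deriv f b * (b' - b) + (b' - b)^2 / (2 * \<gamma>)"
    by (rule smooth_loss_upper_quadratic[OF sm g])
  moreover have "(b' - b)^2 / (2 * \<gamma>) = \<gamma> / 2 * (r - deriv f b)^2"
    unfolding b'_def using g by (simp add: power2_eq_square field_simps)
  ultimately show ?thesis unfolding b'_def by (simp add: power2_eq_square algebra_simps)
qed

lemma fconj_convex_comb:
  assumes fp: "fconj f p \<noteq> \<infinity>" and fq: "fconj f q \<noteq> \<infinity>" and s: "0 \<le> s" "s \<le> 1"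
    and gm: "\<gamma> = 0 \<or> (\<gamma> > 0 \<and> smooth_loss \<gamma> f)"
  shows "fconj f ((1 - s) * p + s * q)
           \<le> ereal ((1 - s) * fconj_real f p + s * fconj_real f q - \<gamma> / 2 * s * (1 - s) * (p - q)^2)"
proof (rule fconj_le)
  fix b
  define e where "e = (if \<gamma> = 0 then 0 else deriv f b)"
  have "p * b - f b + \<gamma> / 2 * (p - e)^2 \<le> fconj_real f p" "q * b - f b + \<gamma> / 2 * (q - e)^2 \<le> fconj_real f q"
    using fconj_real_smooth_lower gm fp fq fenchel_young unfolding e_def by auto
  then have "(1 - s) * (p * b - f b + \<gamma> / 2 * (p - e)^2) + s * (q * b - f b + \<gamma> / 2 * (q - e)^2)
      \<le> (1 - s) * fconj_real f p + s * fconj_real f q"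
    using s by (intro add_mono mult_left_mono) auto
  moreover have "(1 - s) * (p * b - f b + \<gamma> / 2 * (p - e)^2) + s * (q * b - f b + \<gamma> / 2 * (q - e)^2)
      = ((1 - s) * p + s * q) * b - f b + \<gamma> / 2 * ((1 - s) * p + s * q - e)^2 + \<gamma> / 2 * s * (1 - s) * (p - q)^2"
    by (simp add: power2_eq_square field_simps)
  moreover have "\<gamma> / 2 * ((1 - s) * p + s * q - e)^2 \<ge> 0" using gm by auto
  ultimately show "((1 - s) * p + s * q) * b - f b
      \<le> (1 - s) * fconj_real f p + s * fconj_real f q - \<gamma> / 2 * s * (1 - s) * (p - q)^2"
    by linarith
qed

section \<open>Lower bounds for a coordinate step\<close>

text \<open>The lower bound of the paper for the dual increase of the step \<open>\<Delta> = s z\<close> towards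
  \<open>z = u - \<alpha>\<^sub>i\<close>, where \<open>G\<close> is the duality gap of the coordinate, \<open>c \<ge> \<parallel>x\<^sub>i\<parallel>\<^sup>2\<close> and \<open>M = \<lambda> n\<close>;
  \<open>opt_step\<close> is its maximizer over \<open>s \<in> [0, 1]\<close>, the step of Options III and IV.\<close>
definition gain_bound :: "real \<Rightarrow> real \<Rightarrow> real \<Rightarrow> real \<Rightarrow> real \<Rightarrow> real \<Rightarrow> real" where
  "gain_bound \<gamma> c M G z s = s * G + \<gamma> / 2 * s * (1 - s) * z^2 - c * s^2 * z^2 / (2 * M)"

definition opt_step :: "real \<Rightarrow> real \<Rightarrow> real \<Rightarrow> real \<Rightarrow> real \<Rightarrow> real" where
  "opt_step \<gamma> c M G z = min 1 ((G + \<gamma> / 2 * z^2) / (z^2 * (\<gamma> + c / M)))"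

lemma quadratic_max_unit_interval:
  fixes A D s :: real
  assumes "A \<ge> 0" "D \<ge> 0" "D = 0 \<Longrightarrow> A = 0" "0 \<le> s" "s \<le> 1"
  shows "s * A - s^2 * D / 2 \<le> min 1 (A / D) * A - (min 1 (A / D))^2 * D / 2"
proof (cases "A \<ge> D")
  case True
  show ?thesis
  proof (cases "D = 0")
    case False
    then have "min 1 (A / D) = 1" using True assms(2) by simp
    moreover have "(1 - s) * (A - (1 + s) * D / 2) \<ge> 0"
      using assms True mult_left_le[of s D] by (intro mult_nonneg_nonneg) (auto simp: field_simps)
    ultimately show ?thesis by (simp add: power2_eq_square field_simps)
  qed (use assms in simp)
next
  case False
  then have D: "D > 0" and m: "min 1 (A / D) = A / D" using assms by auto
  have "A / D * A - (A / D)^2 * D / 2 - (s * A - s^2 * D / 2) = D / 2 * (s - A / D)^2"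
    using D by (simp add: power2_eq_square field_simps)
  moreover have "D / 2 * (s - A / D)^2 \<ge> 0" using D by simp
  ultimately show ?thesis unfolding m by linarith
qed

lemma gain_bound_antimono:
  assumes "M > 0" "c \<le> c'"
  shows "gain_bound \<gamma> c' M G z s \<le> gain_bound \<gamma> c M G z s"
proof -
  have "c * (s^2 * z^2) / (2 * M) \<le> c' * (s^2 * z^2) / (2 * M)"
    using assms by (intro divide_right_mono mult_right_mono) auto
  then show ?thesis unfolding gain_bound_def by (simp add: mult.assoc)
qed

lemma opt_step_range:
  assumes "G \<ge> 0" "\<gamma> \<ge> 0" "c \<ge> 0" "M > 0"
  shows "0 \<le> opt_step \<gamma> c M G z" "opt_step \<gamma> c M G z \<le> 1"
  using assms unfolding opt_step_def by auto

lemma gain_bound_le_opt_step: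
  assumes G: "G \<ge> 0" and \<gamma>: "\<gamma> \<ge> 0" and c: "c > 0" and M: "M > 0"
    and z0: "z = 0 \<Longrightarrow> G = 0" and s: "0 \<le> s" "s \<le> 1"
  shows "gain_bound \<gamma> c M G z s \<le> gain_bound \<gamma> c M G z (opt_step \<gamma> c M G z)"
proof -
  define A where "A = G + \<gamma> / 2 * z^2"
  define D where "D = z^2 * (\<gamma> + c / M)"
  have alt: "gain_bound \<gamma> c M G z t = t * A - t^2 * D / 2" for t
    unfolding gain_bound_def A_def D_def using M by (simp add: power2_eq_square field_simps)
  have "c / M > 0" using c M by simp
  then have "D = 0 \<Longrightarrow> A = 0" unfolding D_def A_def using \<gamma> z0 by (auto simp: add_nonneg_pos)
  moreover have "A \<ge> 0" "D \<ge> 0" unfolding A_def D_def using G \<gamma> c M by auto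
  ultimately show ?thesis
    unfolding alt opt_step_def A_def[symmetric] D_def[symmetric]
    using quadratic_max_unit_interval s by blast
qed

lemma gain_bound_balanced:
  fixes M \<gamma> R :: real
  assumes M: "M > 0" and \<gamma>: "\<gamma> > 0"
  defines "s \<equiv> M * \<gamma> / (R^2 + M * \<gamma>)"
  shows "gain_bound \<gamma> (R^2) M G z s = s * G"
proof -
  have den: "R^2 + M * \<gamma> > 0" using M \<gamma> by (simp add: add_nonneg_pos)
  have "\<gamma> * (1 - s) = \<gamma> * (R^2 / (R^2 + M * \<gamma>))"
    unfolding s_def using den by (simp add: field_simps)
  also have "\<dots> = s * R^2 / M" unfolding s_def using M by simp
  finally have "\<gamma> * (1 - s) - s * R^2 / M = 0" by simp
  moreover have "gain_bound \<gamma> (R^2) M G z s = s * G + s * z^2 / 2 * (\<gamma> * (1 - s) - s * R^2 / M)"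
    unfolding gain_bound_def using M by (simp add: power2_eq_square field_simps)
  ultimately show ?thesis by simp
qed

lemma gain_bound_lipschitz:
  assumes M: "M > 0" and c: "c \<ge> 0" and z: "\<bar>z\<bar> \<le> 2 * L"
  shows "s * G - s^2 * (4 * L^2 * c) / (2 * M) \<le> gain_bound 0 c M G z s"
proof -
  have "z^2 \<le> (2 * L)^2" using z by (metis abs_ge_zero power2_abs power_mono)
  then have "c * s^2 * z^2 \<le> c * s^2 * (4 * L^2)" using c by (intro mult_left_mono) auto
  then have "c * s^2 * z^2 / (2 * M) \<le> c * s^2 * (4 * L^2) / (2 * M)"
    using M by (intro divide_right_mono) auto
  then show ?thesis unfolding gain_bound_def by (simp add: algebra_simps)
qed

lemma lipschitz_step_size:
  fixes M e G :: real
  assumes "M > 0" "e > 0" "G \<ge> 0"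
  defines "s \<equiv> M * e / (M * e + 2 * G)"
  shows "0 < s" "s \<le> 1" "s * G / (2 * M) \<le> e / 4"
proof -
  have den: "M * e + 2 * G > 0" using assms by (simp add: add_pos_nonneg)
  show "0 < s" "s \<le> 1" unfolding s_def using assms den by auto
  have "M * e * G \<le> M * e / 2 * (M * e + 2 * G)" using assms by (simp add: algebra_simps)
  then have "s * G \<le> M * e / 2" unfolding s_def using den by (simp add: pos_divide_le_eq)
  then have "s * G / (2 * M) \<le> M * e / 2 / (2 * M)" using assms by (intro divide_right_mono) auto
  then show "s * G / (2 * M) \<le> e / 4" using assms by simp
qed

text \<open>One coordinate of the dual with loss \<open>f\<close>, current dual value \<open>al\<close> and margin \<open>a = x\<^sub>i\<^sup>T w\<close>;
  \<open>c = \<parallel>x\<^sub>i\<parallel>\<^sup>2 \<le> R2\<close> and \<open>M = \<lambda> n\<close>.\<close>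
locale coordinate_ascent =
  fixes f :: "real \<Rightarrow> real" and \<gamma> c R2 M a al :: real
  assumes convex: "convex_on UNIV f" and conj_finite: "fconj f (- al) \<noteq> \<infinity>"
    and M_pos: "M > 0" and c_pos: "c > 0" and c_le: "c \<le> R2"
    and smooth_or_zero: "\<gamma> = 0 \<or> (\<gamma> > 0 \<and> smooth_loss \<gamma> f)"
begin

definition "gap = f a + fconj_real f (- al) + a * al"

definition "gain \<Delta> = fconj_real f (- al) - fconj_real f (- (al + \<Delta>)) - (a * \<Delta> + c * \<Delta>^2 / (2 * M))"

definition "obj \<Delta> = - fconj f (- (al + \<Delta>)) - ereal (a * \<Delta> + c * \<Delta>^2 / (2 * M))"

definition "certified s0 \<Delta> \<longleftrightarrow> (\<exists>u. is_subgrad f a (- u) \<and> fconj f (- (al + \<Delta>)) \<noteq> \<infinity> \<and>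
    gain_bound \<gamma> R2 M gap (u - al) s0 \<le> gain \<Delta>)"

lemma gamma_nonneg: "\<gamma> \<ge> 0"
  using smooth_or_zero by auto

lemma gap_nonneg: "gap \<ge> 0"
  using fenchel_young[OF conj_finite, of a] unfolding gap_def by (simp add: algebra_simps)

lemma gap_eq_0: "is_subgrad f a (- al) \<Longrightarrow> gap = 0"
  using fconj_real_subgrad[of f a "- al"] unfolding gap_def by simp

text \<open>Moving \<open>al\<close> towards \<open>u\<close> with \<open>-u \<in> \<partial>f(a)\<close>: the strong convexity of \<open>f\<^sup>*\<close> together with
  \<open>f\<^sup>*(-u) = -u a - f a\<close> gives the quadratic lower bound of the paper.\<close>
lemma gain_segment:
  assumes sg: "is_subgrad f a (- u)" and s: "0 \<le> s" "s \<le> 1"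
  shows "fconj f (- (al + s * (u - al))) \<noteq> \<infinity>"
    and "gain_bound \<gamma> c M gap (u - al) s \<le> gain (s * (u - al))"
proof -
  have eq: "(1 - s) * (- al) + s * (- u) = - (al + s * (u - al))" by (simp add: algebra_simps)
  have le: "fconj f (- (al + s * (u - al))) \<le> ereal ((1 - s) * fconj_real f (- al)
      + s * (- u * a - f a) - \<gamma> / 2 * s * (1 - s) * (u - al)^2)"
    using fconj_convex_comb[OF conj_finite _ s smooth_or_zero, of "- u"] fconj_subgrad[OF sg]
      fconj_real_subgrad[OF sg] unfolding eq by (simp add: power2_commute)
  then show fin: "fconj f (- (al + s * (u - al))) \<noteq> \<infinity>" by auto
  show "gain_bound \<gamma> c M gap (u - al) s \<le> gain (s * (u - al))"
    using le unfolding fconj_eq_ereal[OF fin] gain_def gain_bound_def gap_def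
    by (simp add: power2_eq_square algebra_simps)
qed

lemma certified_segment:
  assumes sg: "is_subgrad f a (- u)" and s: "0 \<le> s" "s \<le> 1"
  shows "certified s (s * (u - al))"
  unfolding certified_def
  using sg gain_segment[OF sg s] gain_bound_antimono[OF M_pos c_le] by (blast intro: order_trans)

lemma obj_le_imp_gain_le:
  assumes le: "obj \<Delta>' \<le> obj \<Delta>" and fin': "fconj f (- (al + \<Delta>')) \<noteq> \<infinity>"
  shows "fconj f (- (al + \<Delta>)) \<noteq> \<infinity>" and "gain \<Delta>' \<le> gain \<Delta>"
proof -
  show fin: "fconj f (- (al + \<Delta>)) \<noteq> \<infinity>"
    using le fconj_eq_ereal[OF fin'] unfolding obj_def by auto
  show "gain \<Delta>' \<le> gain \<Delta>"
    using le unfolding obj_def gain_def fconj_eq_ereal[OF fin] fconj_eq_ereal[OF fin'] by simp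
qed

lemma certified_maximizer:
  assumes max: "\<forall>\<Delta>'. obj \<Delta>' \<le> obj \<Delta>" and s0: "0 \<le> s0" "s0 \<le> 1"
  shows "certified s0 \<Delta>"
proof -
  obtain g where "is_subgrad f a g" using convex_has_subgrad[OF convex] by blast
  then have sg: "is_subgrad f a (- (- g))" by simp
  note seg = gain_segment[OF sg s0] certified_segment[OF sg s0]
  then show ?thesis
    using obj_le_imp_gain_le[OF max[rule_format] seg(1)] unfolding certified_def
    by (blast intro: order_trans)
qed

lemma certified_line_search:
  assumes sg: "is_subgrad f a (- u)" and s: "s \<in> {0..1}"
    and max: "\<forall>s'\<in>{0..1}. obj (s' * (u - al)) \<le> obj (s * (u - al))" and s0: "0 \<le> s0" "s0 \<le> 1"
  shows "certified s0 (s * (u - al))"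
proof -
  note seg = gain_segment[OF sg s0]
  have "obj (s0 * (u - al)) \<le> obj (s * (u - al))" using max s0 by auto
  note le = obj_le_imp_gain_le[OF this seg(1)]
  show ?thesis unfolding certified_def
    using sg le seg(2) gain_bound_antimono[OF M_pos c_le] by (blast intro: order_trans)
qed

lemma certified_opt_step:
  assumes sg: "is_subgrad f a (- u)" and c': "c \<le> c'" "c' \<le> R2" and s0: "0 \<le> s0" "s0 \<le> 1"
  shows "certified s0 (opt_step \<gamma> c' M gap (u - al) * (u - al))"
proof -
  define s where "s = opt_step \<gamma> c' M gap (u - al)"
  have s: "0 \<le> s" "s \<le> 1"
    unfolding s_def using opt_step_range gap_nonneg gamma_nonneg c_pos c' M_pos by auto
  have z0: "gap = 0" if "u - al = 0"
    using gap_eq_0 sg that by simp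
  have "gain_bound \<gamma> R2 M gap (u - al) s0 \<le> gain_bound \<gamma> c' M gap (u - al) s0"
    by (rule gain_bound_antimono[OF M_pos c'(2)])
  also have "\<dots> \<le> gain_bound \<gamma> c' M gap (u - al) s"
    unfolding s_def using gain_bound_le_opt_step gap_nonneg gamma_nonneg c_pos c' M_pos z0 s0 by auto
  also have "\<dots> \<le> gain_bound \<gamma> c M gap (u - al) s"
    by (rule gain_bound_antimono[OF M_pos c'(1)])
  also have "\<dots> \<le> gain (s * (u - al))"
    by (rule gain_segment(2)[OF sg s])
  finally show ?thesis
    unfolding certified_def s_def[symmetric] using sg gain_segment(1)[OF sg s] by blast
qed

text \<open>Options I--V of Prox-SDCA, Option V taking \<open>s\<^sub>0\<close> as its step.\<close>
lemma certified_admissible: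
  assumes step: "(\<forall>\<Delta>'. obj \<Delta>' \<le> obj \<Delta>) \<or> (\<exists>u. is_subgrad f a (- u) \<and>
       ((\<exists>s\<in>{0..1}. \<Delta> = s * (u - al) \<and> (\<forall>s'\<in>{0..1}. obj (s' * (u - al)) \<le> obj (s * (u - al))))
        \<or> \<Delta> = opt_step \<gamma> c M gap (u - al) * (u - al) \<or> \<Delta> = opt_step \<gamma> R2 M gap (u - al) * (u - al)))
     \<or> (allowV \<and> \<Delta> = s0 * (- deriv f a - al))"
    and V: "allowV \<Longrightarrow> smooth_loss \<gamma> f" and s0: "0 \<le> s0" "s0 \<le> 1"
  shows "certified s0 \<Delta>"
  using step
proof (elim disjE exE conjE bexE)
  assume "\<forall>\<Delta>'. obj \<Delta>' \<le> obj \<Delta>"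
  then show ?thesis using certified_maximizer s0 by blast
next
  fix u s assume "is_subgrad f a (- u)" "s \<in> {0..1}" "\<Delta> = s * (u - al)"
    "\<forall>s'\<in>{0..1}. obj (s' * (u - al)) \<le> obj (s * (u - al))"
  then show ?thesis using certified_line_search s0 by blast
next
  fix u assume "is_subgrad f a (- u)" "\<Delta> = opt_step \<gamma> c M gap (u - al) * (u - al)"
  then show ?thesis using certified_opt_step c_le s0 by blast
next
  fix u assume "is_subgrad f a (- u)" "\<Delta> = opt_step \<gamma> R2 M gap (u - al) * (u - al)"
  then show ?thesis using certified_opt_step c_le s0 by blast
next
  assume "allowV" and \<Delta>: "\<Delta> = s0 * (- deriv f a - al)"
  then have "is_subgrad f a (- (- deriv f a))"
    using convex_deriv_subgrad[OF convex] V unfolding smooth_loss_def by simp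
  from certified_segment[OF this s0] show ?thesis using \<Delta> by simp
qed

end

section \<open>Soft thresholding\<close>

text \<open>Per coordinate, \<open>g(w) = w\<^sup>2/2 + k \<bar>w\<bar>\<close> has conjugate \<open>shrink_conj k\<close> and
  \<open>\<nabla>g\<^sup>* = shrink k\<close> (soft thresholding); here \<open>k = \<sigma>/\<lambda>\<close>.\<close>
definition shrink :: "real \<Rightarrow> real \<Rightarrow> real" where
  "shrink k v = sgn v * max 0 (\<bar>v\<bar> - k)"

definition shrink_conj :: "real \<Rightarrow> real \<Rightarrow> real" where
  "shrink_conj k v = (max 0 (\<bar>v\<bar> - k))^2 / 2"

lemma shrink_conj_fenchel_eq:
  "k \<ge> 0 \<Longrightarrow> shrink k v * v = (shrink k v)^2 / 2 + k * \<bar>shrink k v\<bar> + shrink_conj k v"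
  unfolding shrink_conj_def shrink_def
  by (cases "v > 0"; cases "v < 0"; cases "\<bar>v\<bar> \<ge> k")
     (auto simp: power2_eq_square field_simps abs_mult sgn_if max_def)

lemma shrink_maximizes:
  assumes k: "k \<ge> 0"
  shows "u * (v - shrink k v) - k * \<bar>u\<bar> \<le> shrink k v * (v - shrink k v) - k * \<bar>shrink k v\<bar>"
proof (cases "\<bar>v\<bar> < k")
  case True
  have "u * v \<le> \<bar>u\<bar> * \<bar>v\<bar>" by (metis abs_ge_self abs_mult)
  also have "\<dots> \<le> \<bar>u\<bar> * k" using True by (intro mult_left_mono) auto
  finally show ?thesis using True unfolding shrink_def by (simp add: mult.commute)
next
  case False
  have "u * k \<le> \<bar>u\<bar> * k" "- u * k \<le> \<bar>u\<bar> * k" using k by (intro mult_right_mono; simp)+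
  then show ?thesis using False k unfolding shrink_def by (auto simp: sgn_if algebra_simps)
qed

lemma shrink_conj_strong:
  assumes k: "k \<ge> 0"
  shows "u * v - u^2 / 2 - k * \<bar>u\<bar> \<le> shrink_conj k v - (u - shrink k v)^2 / 2"
  using shrink_conj_fenchel_eq[OF k, of v] shrink_maximizes[OF k, of u v]
  by (simp add: power2_eq_square field_simps)

lemma shrink_conj_fenchel_young:
  "k \<ge> 0 \<Longrightarrow> w * v \<le> w^2 / 2 + k * \<bar>w\<bar> + shrink_conj k v"
  using shrink_conj_strong[of k w v] by (smt (verit) zero_le_power2 divide_nonneg_pos)

lemma shrink_conj_smooth:
  assumes k: "k \<ge> 0"
  shows "shrink_conj k (v + e) \<le> shrink_conj k v + shrink k v * e + e^2 / 2"
proof -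
  define w' where "w' = shrink k (v + e)"
  have "shrink_conj k (v + e) = w' * (v + e) - w'^2 / 2 - k * \<bar>w'\<bar>"
    using shrink_conj_fenchel_eq[OF k, of "v + e"] w'_def by simp
  moreover have "w' * v - w'^2 / 2 - k * \<bar>w'\<bar> \<le> shrink_conj k v - (w' - shrink k v)^2 / 2"
    by (rule shrink_conj_strong[OF k])
  moreover have "(w' - shrink k v - e)^2 \<ge> 0" by simp
  ultimately show ?thesis by (simp add: power2_eq_square field_simps)
qed

section \<open>The primal and the dual objective\<close>

lemma dotp_comm: "dotp d a b = dotp d b a"
  unfolding dotp_def by (simp add: mult.commute)

lemma norm2_nonneg: "norm2 d a \<ge> 0"
  unfolding norm2_def by (simp add: sum_nonneg)

lemma norm2_square: "(norm2 d a)^2 = (\<Sum>j<d. (a j)^2)"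
  unfolding norm2_def by (simp add: sum_nonneg)

lemma dotp_norm2_eq_0: "norm2 d a = 0 \<Longrightarrow> dotp d a b = 0"
  unfolding dotp_def using norm2_square[of d a]
  by (auto intro!: sum.neutral simp: sum_nonneg_eq_0_iff)

lemma primal0_mean_le:
  fixes w :: "nat \<Rightarrow> nat \<Rightarrow> real"
  assumes S: "finite S" "S \<noteq> {}" and cv: "\<forall>i<n. convex_on UNIV (\<phi> i)" and \<sigma>: "\<sigma> \<ge> 0"
  shows "primal0 n d \<phi> x \<sigma> (\<lambda>j. (\<Sum>t\<in>S. w t j) / real (card S))
    \<le> (\<Sum>t\<in>S. primal0 n d \<phi> x \<sigma> (w t)) / real (card S)"
proof -
  define m where "m = real (card S)"
  have m: "m > 0" unfolding m_def using S by (simp add: card_gt_0_iff)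
  have loss: "\<phi> i (dotp d (x i) (\<lambda>j. (\<Sum>t\<in>S. w t j) / m)) \<le> (\<Sum>t\<in>S. (1 / m) * \<phi> i (dotp d (x i) (w t)))"
    if "i < n" for i
  proof -
    have "dotp d (x i) (\<lambda>j. (\<Sum>t\<in>S. w t j) / m) = (\<Sum>t\<in>S. (1 / m) *\<^sub>R dotp d (x i) (w t))"
      unfolding dotp_def by (simp add: sum_distrib_left sum_divide_distrib sum.swap[of _ S] algebra_simps)
    moreover have "\<phi> i (\<Sum>t\<in>S. (1 / m) *\<^sub>R dotp d (x i) (w t)) \<le> (\<Sum>t\<in>S. (1 / m) * \<phi> i (dotp d (x i) (w t)))"
      using S cv that m by (intro convex_on_sum) (auto simp: m_def)
    ultimately show ?thesis by simp
  qed
  have "norm1 d (\<lambda>j. (\<Sum>t\<in>S. w t j) / m) = (\<Sum>j<d. \<bar>\<Sum>t\<in>S. w t j\<bar> / m)"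
    unfolding norm1_def using m by simp
  also have "\<dots> \<le> (\<Sum>j<d. (\<Sum>t\<in>S. \<bar>w t j\<bar>) / m)"
    using m by (intro sum_mono divide_right_mono sum_abs) auto
  also have "\<dots> = (\<Sum>t\<in>S. norm1 d (w t)) / m"
    unfolding norm1_def by (simp add: sum_divide_distrib[symmetric] sum.swap[of _ S])
  finally have "primal0 n d \<phi> x \<sigma> (\<lambda>j. (\<Sum>t\<in>S. w t j) / m)
      \<le> (\<Sum>i<n. \<Sum>t\<in>S. (1 / m) * \<phi> i (dotp d (x i) (w t))) / real n + \<sigma> * ((\<Sum>t\<in>S. norm1 d (w t)) / m)"
    unfolding primal0_def by (intro add_mono divide_right_mono sum_mono loss mult_left_mono \<sigma>) auto
  also have "\<dots> = (\<Sum>t\<in>S. primal0 n d \<phi> x \<sigma> (w t)) / m"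
    unfolding primal0_def using m
    by (simp add: sum.distrib sum_divide_distrib[symmetric] sum_distrib_left[symmetric] sum.swap[of _ S] field_simps)
  finally show ?thesis unfolding m_def .
qed

lemma regularization_bias:
  assumes "\<epsilon> > 0" "B > 0" "norm2 d w \<le> B"
  shows "\<epsilon> / B^2 / 2 * (norm2 d w)^2 \<le> \<epsilon> / 2"
proof -
  have "(norm2 d w)^2 \<le> B^2" using assms norm2_nonneg by (intro power_mono) auto
  then have "\<epsilon> / B^2 * (norm2 d w)^2 \<le> \<epsilon> / B^2 * B^2" using assms by (intro mult_left_mono) auto
  then show ?thesis using assms by simp
qed

lemma sum_fun_upd_add:
  fixes f :: "nat \<Rightarrow> real \<Rightarrow> real"
  assumes "i < n"
  shows "(\<Sum>k<n. f k ((\<alpha>(i := \<alpha> i + \<Delta>)) k)) = (\<Sum>k<n. f k (\<alpha> k)) + (f i (\<alpha> i + \<Delta>) - f i (\<alpha> i))"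
proof -
  have "(\<Sum>k<n. f k ((\<alpha>(i := \<alpha> i + \<Delta>)) k))
      = (\<Sum>k<n. f k (\<alpha> k) + (if k = i then f i (\<alpha> i + \<Delta>) - f i (\<alpha> i) else 0))"
    by (rule sum.cong) auto
  then show ?thesis using assms by (simp add: sum.distrib)
qed

locale sdca =
  fixes n d :: nat and \<phi> :: "nat \<Rightarrow> real \<Rightarrow> real" and x :: "nat \<Rightarrow> nat \<Rightarrow> real" and \<sigma> lam :: real
  assumes n_pos: "n \<ge> 1" and \<sigma>_pos: "\<sigma> > 0" and lam_pos: "lam > 0"
    and loss_convex: "\<And>i. i < n \<Longrightarrow> convex_on UNIV (\<phi> i)"
    and loss_nonneg: "\<And>i a. i < n \<Longrightarrow> \<phi> i a \<ge> 0"
begin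

definition "active i \<longleftrightarrow> norm2 d (x i) \<noteq> 0"

text \<open>A coordinate with \<open>x\<^sub>i = 0\<close> never influences \<open>w\<close>; its dual term \<open>-\<phi>\<^sub>i\<^sup>*(-\<alpha>\<^sub>i)\<close> is replaced
  by its supremum \<open>-\<phi>\<^sub>i(0)\<close>, so that it contributes no duality gap whatever the update does.\<close>
definition "psi i al = (if active i then fconj_real (\<phi> i) (- al) else - \<phi> i 0)"

definition "gconj v = (\<Sum>j<d. shrink_conj (\<sigma> / lam) (v j))"

definition "primal w = primal0 n d \<phi> x \<sigma> w + lam / 2 * (norm2 d w)^2"

definition "dual \<alpha> = (\<Sum>i<n. - psi i (\<alpha> i)) / real n - lam * gconj (vdual n lam x \<alpha>)"

definition "w_of \<alpha> = wof n lam \<sigma> x \<alpha>"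

definition "margin \<alpha> i = dotp d (x i) (w_of \<alpha>)"

definition "loss_gap \<alpha> i = \<phi> i (margin \<alpha> i) + psi i (\<alpha> i) + margin \<alpha> i * \<alpha> i"

definition "dual_feasible \<alpha> \<longleftrightarrow> (\<forall>i<n. active i \<longrightarrow> fconj (\<phi> i) (- \<alpha> i) \<noteq> \<infinity>)"

lemma threshold_nonneg: "\<sigma> / lam \<ge> 0"
  using \<sigma>_pos lam_pos by simp

lemma n_real_pos: "real n > 0"
  using n_pos by simp

lemma w_of_shrink: "w_of \<alpha> j = shrink (\<sigma> / lam) (vdual n lam x \<alpha> j)"
  unfolding w_of_def wof_def gradgconj_def shrink_def by simp

lemma lam_inner_vdual:
  "lam * (\<Sum>j<d. w j * vdual n lam x \<alpha> j) = (\<Sum>i<n. \<alpha> i * dotp d (x i) w) / real n"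
proof -
  have "lam * (\<Sum>j<d. w j * vdual n lam x \<alpha> j) = (\<Sum>j<d. \<Sum>i<n. w j * (\<alpha> i * x i j)) / real n"
    unfolding vdual_def using lam_pos n_real_pos
    by (simp add: sum_distrib_left sum_divide_distrib field_simps)
  also have "\<dots> = (\<Sum>i<n. \<alpha> i * dotp d (x i) w) / real n"
    unfolding dotp_def by (subst sum.swap) (simp add: sum_distrib_left algebra_simps)
  finally show ?thesis .
qed

lemma regularizer_fenchel_young:
  "lam * (\<Sum>j<d. w j * v j) \<le> lam / 2 * (norm2 d w)^2 + \<sigma> * norm1 d w + lam * gconj v"
proof -
  have "(\<Sum>j<d. w j * v j) \<le> (\<Sum>j<d. (w j)^2 / 2 + \<sigma> / lam * \<bar>w j\<bar> + shrink_conj (\<sigma> / lam) (v j))"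
    by (intro sum_mono shrink_conj_fenchel_young threshold_nonneg)
  also have "\<dots> = (norm2 d w)^2 / 2 + \<sigma> / lam * norm1 d w + gconj v"
    unfolding norm2_square norm1_def gconj_def by (simp add: sum.distrib sum_distrib_left sum_divide_distrib)
  finally have "lam * (\<Sum>j<d. w j * v j) \<le> lam * ((norm2 d w)^2 / 2 + \<sigma> / lam * norm1 d w + gconj v)"
    using lam_pos by (simp add: mult_left_mono)
  also have "\<dots> = lam / 2 * (norm2 d w)^2 + \<sigma> * norm1 d w + lam * gconj v"
    using lam_pos by (simp add: field_simps)
  finally show ?thesis .
qed

lemma regularizer_fenchel_eq:
  "lam * (\<Sum>j<d. w_of \<alpha> j * vdual n lam x \<alpha> j)
     = lam / 2 * (norm2 d (w_of \<alpha>))^2 + \<sigma> * norm1 d (w_of \<alpha>) + lam * gconj (vdual n lam x \<alpha>)"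
proof -
  have "(\<Sum>j<d. w_of \<alpha> j * vdual n lam x \<alpha> j) = (\<Sum>j<d. (w_of \<alpha> j)^2 / 2 + \<sigma> / lam * \<bar>w_of \<alpha> j\<bar>
      + shrink_conj (\<sigma> / lam) (vdual n lam x \<alpha> j))"
    unfolding w_of_shrink by (intro sum.cong refl shrink_conj_fenchel_eq threshold_nonneg)
  also have "\<dots> = (norm2 d (w_of \<alpha>))^2 / 2 + \<sigma> / lam * norm1 d (w_of \<alpha>) + gconj (vdual n lam x \<alpha>)"
    unfolding norm2_square norm1_def gconj_def by (simp add: sum.distrib sum_distrib_left sum_divide_distrib)
  finally show ?thesis using lam_pos by (simp add: field_simps)
qed

lemma primal_dual_gap: "primal (w_of \<alpha>) - dual \<alpha> = (\<Sum>i<n. loss_gap \<alpha> i) / real n"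
  unfolding primal_def dual_def primal0_def loss_gap_def margin_def
  using regularizer_fenchel_eq[of \<alpha>] lam_inner_vdual[of "w_of \<alpha>" \<alpha>]
  by (simp add: sum.distrib sum_negf add_divide_distrib algebra_simps)

lemma weak_duality:
  assumes "dual_feasible \<alpha>"
  shows "dual \<alpha> \<le> primal w"
proof -
  have "0 \<le> \<phi> i (dotp d (x i) w) + psi i (\<alpha> i) + \<alpha> i * dotp d (x i) w" if "i < n" for i
  proof (cases "active i")
    case True
    then have "fconj (\<phi> i) (- \<alpha> i) \<noteq> \<infinity>" using assms that unfolding dual_feasible_def by auto
    from fenchel_young[OF this, of "dotp d (x i) w"] show ?thesis unfolding psi_def using True by simp
  next
    case False
    then show ?thesis using dotp_norm2_eq_0 unfolding psi_def active_def by auto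
  qed
  then have "0 \<le> (\<Sum>i<n. \<phi> i (dotp d (x i) w) + psi i (\<alpha> i) + \<alpha> i * dotp d (x i) w) / real n"
    by (intro divide_nonneg_pos sum_nonneg n_real_pos) auto
  then show ?thesis
    unfolding primal_def dual_def primal0_def
    using regularizer_fenchel_young[of w "vdual n lam x \<alpha>"] lam_inner_vdual[of w \<alpha>]
    by (simp add: sum.distrib sum_negf add_divide_distrib algebra_simps)
qed

lemma dual_feasible_0: "dual_feasible (\<lambda>_. 0)"
  and dual_0_nonneg: "dual (\<lambda>_. 0) \<ge> 0"
proof -
  have f0: "fconj (\<phi> i) 0 \<le> ereal 0" if "i < n" for i
    by (rule fconj_le) (use loss_nonneg[OF that] in simp)
  then show "dual_feasible (\<lambda>_. 0)" unfolding dual_feasible_def by fastforce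
  have "psi i 0 \<le> 0" if "i < n" for i
    using f0[OF that] loss_nonneg[OF that, of 0] unfolding psi_def fconj_real_def
    by (cases "fconj (\<phi> i) 0") auto
  then have "(\<Sum>i<n. - psi i 0) \<ge> 0" by (intro sum_nonneg) auto
  moreover have "gconj (vdual n lam x (\<lambda>_. 0)) = 0"
    unfolding gconj_def vdual_def shrink_conj_def using threshold_nonneg by simp
  ultimately show "dual (\<lambda>_. 0) \<ge> 0" unfolding dual_def by simp
qed

lemma primal_0: "primal (\<lambda>_. 0) = (\<Sum>i<n. \<phi> i 0) / real n"
  unfolding primal_def primal0_def norm2_def norm1_def dotp_def by simp

lemma vdual_update:
  assumes "i < n"
  shows "vdual n lam x (\<alpha>(i := \<alpha> i + \<Delta>)) j = vdual n lam x \<alpha> j + \<Delta> * x i j / (lam * real n)"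
  using sum_fun_upd_add[OF assms, of "\<lambda>k a. a * x k j" \<alpha> \<Delta>]
  unfolding vdual_def by (simp add: add_divide_distrib algebra_simps)

text \<open>The smoothness of \<open>g\<^sup>*\<close> turns the change of the dual into the one-dimensional objective
  maximized by Option I.\<close>
lemma dual_update_ge:
  assumes i: "i < n"
  shows "real n * (dual (\<alpha>(i := \<alpha> i + \<Delta>)) - dual \<alpha>)
     \<ge> psi i (\<alpha> i) - psi i (\<alpha> i + \<Delta>) - (margin \<alpha> i * \<Delta> + (norm2 d (x i))^2 * \<Delta>^2 / (2 * lam * real n))"
proof -
  define v where "v = vdual n lam x \<alpha>"
  define e where "e j = \<Delta> * x i j / (lam * real n)" for j
  have "gconj (vdual n lam x (\<alpha>(i := \<alpha> i + \<Delta>))) \<le> (\<Sum>j<d. shrink_conj (\<sigma> / lam) (v j) + w_of \<alpha> j * e j + (e j)^2 / 2)"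
    unfolding gconj_def vdual_update[OF i] v_def e_def w_of_shrink by (intro sum_mono shrink_conj_smooth threshold_nonneg)
  also have "\<dots> = gconj v + \<Delta> / (lam * real n) * margin \<alpha> i + \<Delta>^2 / (lam * real n)^2 * (norm2 d (x i))^2 / 2"
    unfolding gconj_def e_def margin_def dotp_def norm2_square
    by (simp add: sum.distrib sum_distrib_left sum_divide_distrib power_divide power_mult_distrib algebra_simps)
  finally have G: "gconj (vdual n lam x (\<alpha>(i := \<alpha> i + \<Delta>))) - gconj v
      \<le> \<Delta> / (lam * real n) * margin \<alpha> i + \<Delta>^2 / (lam * real n)^2 * (norm2 d (x i))^2 / 2"
    by simp
  have "real n * (dual (\<alpha>(i := \<alpha> i + \<Delta>)) - dual \<alpha>) = psi i (\<alpha> i) - psi i (\<alpha> i + \<Delta>)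
      - real n * lam * (gconj (vdual n lam x (\<alpha>(i := \<alpha> i + \<Delta>))) - gconj v)"
  proof -
    have S: "(\<Sum>k<n. - psi k ((\<alpha>(i := \<alpha> i + \<Delta>)) k)) = (\<Sum>k<n. - psi k (\<alpha> k)) + (psi i (\<alpha> i) - psi i (\<alpha> i + \<Delta>))"
      using sum_fun_upd_add[OF i, of "\<lambda>k a. - psi k a" \<alpha> \<Delta>] by simp
    show ?thesis unfolding dual_def v_def S using n_real_pos by (simp add: field_simps)
  qed
  moreover have "real n * lam * (\<Delta> / (lam * real n) * margin \<alpha> i + \<Delta>^2 / (lam * real n)^2 * (norm2 d (x i))^2 / 2)
      = margin \<alpha> i * \<Delta> + (norm2 d (x i))^2 * \<Delta>^2 / (2 * lam * real n)"
    using n_real_pos lam_pos by (simp add: power2_eq_square field_simps)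
  moreover have "real n * lam * (gconj (vdual n lam x (\<alpha>(i := \<alpha> i + \<Delta>))) - gconj v)
      \<le> real n * lam * (\<Delta> / (lam * real n) * margin \<alpha> i + \<Delta>^2 / (lam * real n)^2 * (norm2 d (x i))^2 / 2)"
    using G n_real_pos lam_pos by (intro mult_left_mono) auto
  ultimately show ?thesis by linarith
qed

lemma step_ok_certified:
  assumes feas: "dual_feasible \<alpha>" and i: "i < n" and act: "active i"
    and step: "step_ok \<phi> d n lam \<sigma> x R \<gamma> allowV \<alpha> i \<Delta>" and R: "norm2 d (x i) \<le> R"
    and \<gamma>: "\<gamma> = 0 \<or> (\<gamma> > 0 \<and> smooth_loss \<gamma> (\<phi> i))"
    and V: "allowV \<Longrightarrow> \<gamma> > 0 \<and> smooth_loss \<gamma> (\<phi> i)"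
    and s0: "0 \<le> s0" "s0 \<le> 1" "allowV \<Longrightarrow> s0 = lam * real n * \<gamma> / (R^2 + lam * real n * \<gamma>)"
  shows "\<exists>u. is_subgrad (\<phi> i) (margin \<alpha> i) (- u) \<and> fconj (\<phi> i) (- (\<alpha> i + \<Delta>)) \<noteq> \<infinity> \<and>
    gain_bound \<gamma> (R^2) (lam * real n) (loss_gap \<alpha> i) (u - \<alpha> i) s0
      \<le> psi i (\<alpha> i) - psi i (\<alpha> i + \<Delta>) - (margin \<alpha> i * \<Delta> + (norm2 d (x i))^2 * \<Delta>^2 / (2 * lam * real n))"
proof -
  interpret C: coordinate_ascent "\<phi> i" \<gamma> "(norm2 d (x i))^2" "R^2" "lam * real n" "margin \<alpha> i" "\<alpha> i"
  proof
    show "fconj (\<phi> i) (- \<alpha> i) \<noteq> \<infinity>" using feas i act unfolding dual_feasible_def by auto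
    show "(norm2 d (x i))^2 \<le> R^2" using R norm2_nonneg by (rule power_mono)
  qed (use loss_convex i lam_pos n_real_pos act \<gamma> in \<open>auto simp: active_def\<close>)
  have "coord_obj \<phi> d n lam x (w_of \<alpha>) i \<alpha> = C.obj"
  proof
    show "coord_obj \<phi> d n lam x (w_of \<alpha>) i \<alpha> \<Delta>' = C.obj \<Delta>'" for \<Delta>'
      unfolding C.obj_def by (simp add: coord_obj_def margin_def dotp_comm mult.assoc)
  qed
  moreover have "s_opt \<phi> n lam \<gamma> c (margin \<alpha> i) \<alpha> i z = opt_step \<gamma> c (lam * real n) C.gap z" for c z
    unfolding s_opt_def opt_step_def C.gap_def fconj_real_def by simp
  ultimately have "C.certified s0 \<Delta>"
    using step s0 V unfolding step_ok_def Let_def w_of_def[symmetric] margin_def[symmetric]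
    by (intro C.certified_admissible[where allowV = allowV]) auto
  then show ?thesis unfolding C.certified_def C.gain_def C.gap_def loss_gap_def psi_def
    using act by (simp add: mult.assoc)
qed

lemma step_bound:
  assumes feas: "dual_feasible \<alpha>" and i: "i < n"
    and step: "step_ok \<phi> d n lam \<sigma> x R \<gamma> allowV \<alpha> i \<Delta>" and R: "norm2 d (x i) \<le> R"
    and \<gamma>: "\<gamma> = 0 \<or> (\<gamma> > 0 \<and> smooth_loss \<gamma> (\<phi> i))"
    and V: "allowV \<Longrightarrow> \<gamma> > 0 \<and> smooth_loss \<gamma> (\<phi> i)"
    and s0: "0 \<le> s0" "s0 \<le> 1" "allowV \<Longrightarrow> s0 = lam * real n * \<gamma> / (R^2 + lam * real n * \<gamma>)"
  shows "dual_feasible (\<alpha>(i := \<alpha> i + \<Delta>)) \<and>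
    (\<exists>u. (if active i then is_subgrad (\<phi> i) (margin \<alpha> i) (- u) else u = \<alpha> i) \<and>
    gain_bound \<gamma> (R^2) (lam * real n) (loss_gap \<alpha> i) (u - \<alpha> i) s0 \<le> real n * (dual (\<alpha>(i := \<alpha> i + \<Delta>)) - dual \<alpha>))"
proof (cases "active i")
  case False
  then have "margin \<alpha> i = 0" and "norm2 d (x i) = 0"
    using dotp_norm2_eq_0 unfolding margin_def active_def by auto
  then show ?thesis using dual_update_ge[OF i, of \<alpha> \<Delta>] feas False
    unfolding loss_gap_def psi_def gain_bound_def dual_feasible_def by (auto intro!: exI[of _ "\<alpha> i"])
next
  case True
  obtain u where sg: "is_subgrad (\<phi> i) (margin \<alpha> i) (- u)" and fin: "fconj (\<phi> i) (- (\<alpha> i + \<Delta>)) \<noteq> \<infinity>"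
    and gain: "gain_bound \<gamma> (R^2) (lam * real n) (loss_gap \<alpha> i) (u - \<alpha> i) s0
      \<le> psi i (\<alpha> i) - psi i (\<alpha> i + \<Delta>) - (margin \<alpha> i * \<Delta> + (norm2 d (x i))^2 * \<Delta>^2 / (2 * lam * real n))"
    using step_ok_certified[OF feas i True step R \<gamma> V s0] by blast
  have "gain_bound \<gamma> (R^2) (lam * real n) (loss_gap \<alpha> i) (u - \<alpha> i) s0
      \<le> real n * (dual (\<alpha>(i := \<alpha> i + \<Delta>)) - dual \<alpha>)"
    using gain dual_update_ge[OF i, of \<alpha> \<Delta>] by linarith
  moreover have "dual_feasible (\<alpha>(i := \<alpha> i + \<Delta>))" using feas fin unfolding dual_feasible_def by auto
  ultimately show ?thesis using sg True by auto
qed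

end

section \<open>Expected progress of the dual\<close>

lemma expect_Suc:
  assumes n: "n \<ge> 1"
  shows "expect n (Suc t) F = expect n t (\<lambda>is. (\<Sum>i<n. F (is(t := i))) / real n)"
proof -
  let ?P = "\<lambda>t. PiE {..<t} (\<lambda>_. {..<n})"
  have e: "?P (Suc t) = (\<lambda>(y, g). g(t := y)) ` ({..<n} \<times> ?P t)"
    using PiE_insert_eq[of t "{..<t}" "\<lambda>_. {..<n}"] by (simp add: lessThan_Suc)
  have inj: "inj_on (\<lambda>(y, g). g(t := y)) ({..<n} \<times> ?P t)"
    using inj_combinator[of t "{..<t}" "\<lambda>_. {..<n}"] by simp
  have "(\<Sum>is\<in>?P (Suc t). F is) = (\<Sum>y<n. \<Sum>g\<in>?P t. F (g(t := y)))"
    unfolding e sum.reindex[OF inj] by (simp add: sum.cartesian_product split_beta)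
  also have "\<dots> = (\<Sum>g\<in>?P t. \<Sum>y<n. F (g(t := y)))"
    by (rule sum.swap)
  finally show ?thesis unfolding expect_def using n
    by (simp add: sum_divide_distrib[symmetric] field_simps)
qed

lemma expect_prefix:
  assumes n: "n \<ge> 1" and prefix: "\<And>is is'. (\<forall>k<t. is k = is' k) \<Longrightarrow> F is = F is'" and "t \<le> T"
  shows "expect n T F = expect n t F"
  using \<open>t \<le> T\<close>
proof (induction T)
  case (Suc T)
  show ?case
  proof (cases "t = Suc T")
    case False
    then have "t \<le> T" using Suc.prems by simp
    then have "F (is(T := i)) = F is" for "is" i by (intro prefix) auto
    then show ?thesis using Suc.IH \<open>t \<le> T\<close> n unfolding expect_Suc[OF n] by simp
  qed simp
qed simp

lemma expect_const: "n \<ge> 1 \<Longrightarrow> expect n T (\<lambda>_. c) = c"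
  unfolding expect_def by (simp add: card_PiE)

lemma expect_add: "expect n T (\<lambda>is. F is + G is) = expect n T F + expect n T G"
  unfolding expect_def by (simp add: sum.distrib add_divide_distrib)

lemma expect_diff: "expect n T (\<lambda>is. F is - G is) = expect n T F - expect n T G"
  unfolding expect_def by (simp add: sum_subtractf diff_divide_distrib)

lemma expect_mult_left: "expect n T (\<lambda>is. c * F is) = c * expect n T F"
  unfolding expect_def by (simp add: sum_distrib_left)

lemma expect_divide: "expect n T (\<lambda>is. F is / c) = expect n T F / c"
  unfolding expect_def by (simp add: sum_divide_distrib[symmetric])

lemma expect_sum: "finite S \<Longrightarrow> expect n T (\<lambda>is. \<Sum>k\<in>S. F k is) = (\<Sum>k\<in>S. expect n T (F k))"
  unfolding expect_def by (simp add: sum.swap[of _ S] sum_divide_distrib)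

lemma expect_mono:
  assumes "\<And>is. is \<in> PiE {..<T} (\<lambda>_. {..<n}) \<Longrightarrow> F is \<le> G is"
  shows "expect n T F \<le> expect n T G"
  unfolding expect_def by (intro divide_right_mono sum_mono assms) auto

lemma alphas_prefix: "(\<forall>k<t. is k = is' k) \<Longrightarrow> alphas upd is t = alphas upd is' t"
  by (induction t) (auto simp: Let_def)

lemma one_minus_power_le_exp:
  assumes "0 \<le> a" "a \<le> 1"
  shows "(1 - a)^t \<le> exp (- (a * real t))"
proof -
  have "(1 - a)^t \<le> (exp (- a))^t"
    using assms exp_ge_add_one_self[of "- a"] by (intro power_mono) auto
  then show ?thesis by (simp add: exp_of_nat_mult[symmetric] mult.commute)
qed

locale sdca_run = sdca +
  fixes upd :: "(nat \<Rightarrow> real) \<Rightarrow> nat \<Rightarrow> real" and s0 K :: real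
  assumes s0_pos: "s0 > 0" and s0_le_1: "s0 \<le> 1" and K_nonneg: "K \<ge> 0"
    and update_bound: "\<And>\<alpha> i. dual_feasible \<alpha> \<Longrightarrow> i < n \<Longrightarrow> dual_feasible (\<alpha>(i := \<alpha> i + upd \<alpha> i)) \<and>
      real n * (dual (\<alpha>(i := \<alpha> i + upd \<alpha> i)) - dual \<alpha>) \<ge> s0 * loss_gap \<alpha> i - K"
begin

lemma alphas_feasible: "(\<forall>k<t. is k < n) \<Longrightarrow> dual_feasible (alphas upd is t)"
proof (induction t)
  case (Suc t)
  then have "dual_feasible (alphas upd is t)" "is t < n" by auto
  from conjunct1[OF update_bound[OF this]] show ?case by (simp only: alphas.simps Let_def)
qed (simp add: dual_feasible_0)

lemma alphas_feasible_PiE: "is \<in> PiE {..<t} (\<lambda>_. {..<n}) \<Longrightarrow> dual_feasible (alphas upd is t)"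
  by (intro alphas_feasible) auto

definition "primal_opt = (INF w. primal w)"

lemma primal_opt_le: "primal_opt \<le> primal w"
  unfolding primal_opt_def
  by (rule cINF_lower) (use weak_duality[OF dual_feasible_0] in \<open>auto simp: bdd_below_def\<close>)

lemma dual_le_primal_opt: "dual_feasible \<alpha> \<Longrightarrow> dual \<alpha> \<le> primal_opt"
  unfolding primal_opt_def by (rule cINF_greatest) (auto intro: weak_duality)

definition "exp_dual t = expect n t (\<lambda>is. dual (alphas upd is t))"

definition "exp_gap t = expect n t (\<lambda>is. primal (w_of (alphas upd is t)) - dual (alphas upd is t))"

definition "suboptimality t = primal_opt - exp_dual t"

lemma suboptimality_nonneg: "suboptimality t \<ge> 0"
proof -
  have "exp_dual t \<le> expect n t (\<lambda>_. primal_opt)"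
    unfolding exp_dual_def by (intro expect_mono dual_le_primal_opt alphas_feasible_PiE)
  then show ?thesis unfolding suboptimality_def using expect_const n_pos by simp
qed

lemma suboptimality_le_exp_gap: "suboptimality t \<le> exp_gap t"
proof -
  have "expect n t (\<lambda>_. primal_opt) \<le> expect n t (\<lambda>is. primal (w_of (alphas upd is t)))"
    by (intro expect_mono primal_opt_le)
  then show ?thesis
    unfolding suboptimality_def exp_gap_def exp_dual_def expect_diff using expect_const n_pos by simp
qed

lemma suboptimality_0_le_1:
  assumes "(\<Sum>i<n. \<phi> i 0) / real n \<le> 1"
  shows "suboptimality 0 \<le> 1"
  using primal_opt_le[of "\<lambda>_. 0"] primal_0 dual_0_nonneg assms expect_const[OF n_pos]
  unfolding suboptimality_def exp_dual_def by simp

lemma mean_update_ge: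
  assumes feas: "dual_feasible \<alpha>"
  shows "(\<Sum>i<n. dual (\<alpha>(i := \<alpha> i + upd \<alpha> i))) / real n - dual \<alpha>
    \<ge> s0 / real n * (primal (w_of \<alpha>) - dual \<alpha>) - K / real n"
proof -
  have "(s0 * loss_gap \<alpha> i - K) / real n \<le> dual (\<alpha>(i := \<alpha> i + upd \<alpha> i)) - dual \<alpha>" if "i < n" for i
    using update_bound[OF feas that] n_real_pos by (simp add: field_simps)
  then have "(\<Sum>i<n. (s0 * loss_gap \<alpha> i - K) / real n) / real n
      \<le> (\<Sum>i<n. dual (\<alpha>(i := \<alpha> i + upd \<alpha> i)) - dual \<alpha>) / real n"
    using n_real_pos by (intro divide_right_mono sum_mono) auto
  moreover have "(\<Sum>i<n. (s0 * loss_gap \<alpha> i - K) / real n) / real n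
      = s0 / real n * ((\<Sum>i<n. loss_gap \<alpha> i) / real n) - K / real n"
    using n_real_pos by (simp add: sum_subtractf sum_distrib_left[symmetric] sum_divide_distrib[symmetric] field_simps)
  moreover have "(\<Sum>i<n. dual (\<alpha>(i := \<alpha> i + upd \<alpha> i)) - dual \<alpha>) / real n
      = (\<Sum>i<n. dual (\<alpha>(i := \<alpha> i + upd \<alpha> i))) / real n - dual \<alpha>"
    using n_real_pos by (simp add: sum_subtractf field_simps)
  ultimately show ?thesis unfolding primal_dual_gap by linarith
qed

lemma exp_dual_Suc_ge: "exp_dual (Suc t) - exp_dual t \<ge> s0 / real n * exp_gap t - K / real n"
proof -
  have step: "alphas upd (is(t := i)) (Suc t) = (alphas upd is t)(i := alphas upd is t i + upd (alphas upd is t) i)"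
    for "is" i
    using alphas_prefix[of t "is(t := i)" "is" upd] by (simp add: Let_def)
  have "exp_dual (Suc t) - exp_dual t = expect n t (\<lambda>is.
      (\<Sum>i<n. dual ((alphas upd is t)(i := alphas upd is t i + upd (alphas upd is t) i))) / real n
      - dual (alphas upd is t))"
    unfolding exp_dual_def expect_Suc[OF n_pos] step expect_diff ..
  also have "\<dots> \<ge> expect n t (\<lambda>is. s0 / real n * (primal (w_of (alphas upd is t)) - dual (alphas upd is t))
      - K / real n)"
    by (intro expect_mono mean_update_ge alphas_feasible_PiE)
  also have "expect n t (\<lambda>is. s0 / real n * (primal (w_of (alphas upd is t)) - dual (alphas upd is t))
      - K / real n) = s0 / real n * exp_gap t - K / real n"
    unfolding expect_diff expect_mult_left exp_gap_def using expect_const n_pos by simp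
  finally show ?thesis .
qed

lemma suboptimality_bound:
  "suboptimality t \<le> (1 - s0 / real n)^t * suboptimality 0 + K / s0"
proof (induction t)
  case 0
  then show ?case using K_nonneg s0_pos by simp
next
  case (Suc t)
  have q: "0 \<le> 1 - s0 / real n" using s0_le_1 n_pos by (simp add: field_simps)
  have "suboptimality (Suc t) \<le> suboptimality t - s0 / real n * exp_gap t + K / real n"
    using exp_dual_Suc_ge[of t] unfolding suboptimality_def by simp
  also have "\<dots> \<le> (1 - s0 / real n) * suboptimality t + K / real n"
    using mult_left_mono[OF suboptimality_le_exp_gap[of t], of "s0 / real n"] s0_pos
    by (simp add: algebra_simps)
  also have "\<dots> \<le> (1 - s0 / real n) * ((1 - s0 / real n)^t * suboptimality 0 + K / s0) + K / real n"
    using Suc.IH q by (intro add_right_mono mult_left_mono) auto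
  also have "\<dots> = (1 - s0 / real n)^(Suc t) * suboptimality 0 + K / s0"
    using s0_pos n_real_pos by (simp add: field_simps)
  finally show ?case .
qed

lemma exp_gap_le_suboptimality: "s0 / real n * exp_gap t \<le> suboptimality t + K / real n"
  using exp_dual_Suc_ge[of t] suboptimality_nonneg[of "Suc t"] unfolding suboptimality_def by simp

lemma sum_exp_gap_le:
  assumes "T0 \<le> T"
  shows "s0 / real n * (\<Sum>t\<in>{T0..<T}. exp_gap t) \<le> suboptimality T0 + real (T - T0) * K / real n"
proof -
  have "s0 / real n * (\<Sum>t\<in>{T0..<T0 + k}. exp_gap t) \<le> exp_dual (T0 + k) - exp_dual T0 + real k * K / real n" for k
  proof (induction k)
    case (Suc k)
    then show ?case using exp_dual_Suc_ge[of "T0 + k"] by (simp add: distrib_left add_divide_distrib algebra_simps)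
  qed simp
  from this[of "T - T0"] show ?thesis
    using suboptimality_nonneg[of T] assms unfolding suboptimality_def by simp
qed

lemma expect_primal_le:
  "expect n t (\<lambda>is. primal0 n d \<phi> x \<sigma> (w_of (alphas upd is t)))
     \<le> exp_gap t + primal0 n d \<phi> x \<sigma> w + lam / 2 * (norm2 d w)^2"
proof -
  have "expect n t (\<lambda>is. primal0 n d \<phi> x \<sigma> (w_of (alphas upd is t)))
     \<le> expect n t (\<lambda>is. (primal (w_of (alphas upd is t)) - dual (alphas upd is t)) + primal w)"
  proof (rule expect_mono)
    fix "is" assume "is \<in> PiE {..<t} (\<lambda>_. {..<n})"
    then show "primal0 n d \<phi> x \<sigma> (w_of (alphas upd is t))
      \<le> (primal (w_of (alphas upd is t)) - dual (alphas upd is t)) + primal w"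
      using weak_duality[OF alphas_feasible_PiE] lam_pos unfolding primal_def by fastforce
  qed
  then show ?thesis unfolding expect_add exp_gap_def primal_def using expect_const[OF n_pos] by simp
qed

lemma suboptimality_exp_bound:
  assumes "(\<Sum>i<n. \<phi> i 0) / real n \<le> 1"
  shows "suboptimality t \<le> exp (- (s0 / real n * real t)) + K / s0"
proof -
  have q: "0 \<le> 1 - s0 / real n" using s0_le_1 n_pos by (simp add: field_simps)
  have "(1 - s0 / real n)^t * suboptimality 0 \<le> (1 - s0 / real n)^t"
    using suboptimality_0_le_1[OF assms] suboptimality_nonneg[of 0] q by (simp add: mult_left_le)
  also have "\<dots> \<le> exp (- (s0 / real n * real t))"
    using s0_pos s0_le_1 n_pos by (intro one_minus_power_le_exp) (auto simp: field_simps)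
  finally show ?thesis using suboptimality_bound[of t] by linarith
qed

lemma expect_primal_mean_le:
  assumes "T0 < T"
  shows "expect n T (\<lambda>is. primal0 n d \<phi> x \<sigma> (wavg n lam \<sigma> x upd is T0 T))
    \<le> (\<Sum>t\<in>{T0..<T}. exp_gap t) / real (T - T0) + primal0 n d \<phi> x \<sigma> w + lam / 2 * (norm2 d w)^2"
proof -
  define m where "m = real (T - T0)"
  have m: "m > 0" "card {T0..<T} = T - T0" unfolding m_def using assms by auto
  have "expect n T (\<lambda>is. primal0 n d \<phi> x \<sigma> (wavg n lam \<sigma> x upd is T0 T))
      \<le> expect n T (\<lambda>is. (\<Sum>t\<in>{T0..<T}. primal0 n d \<phi> x \<sigma> (w_of (alphas upd is t))) / m)"
    unfolding wavg_def w_of_def[symmetric] m_def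
    using primal0_mean_le[of "{T0..<T}" n \<phi>] m assms loss_convex \<sigma>_pos by (intro expect_mono) auto
  also have "\<dots> = (\<Sum>t\<in>{T0..<T}. expect n t (\<lambda>is. primal0 n d \<phi> x \<sigma> (w_of (alphas upd is t)))) / m"
  proof -
    have "expect n T (\<lambda>is. primal0 n d \<phi> x \<sigma> (w_of (alphas upd is t)))
        = expect n t (\<lambda>is. primal0 n d \<phi> x \<sigma> (w_of (alphas upd is t)))" if "t \<in> {T0..<T}" for t
      using that by (intro expect_prefix n_pos) (metis alphas_prefix, simp)
    then show ?thesis unfolding expect_divide expect_sum[OF finite_atLeastLessThan] by simp
  qed
  also have "\<dots> \<le> (\<Sum>t\<in>{T0..<T}. exp_gap t + (primal0 n d \<phi> x \<sigma> w + lam / 2 * (norm2 d w)^2)) / m"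
    using m expect_primal_le by (intro divide_right_mono sum_mono) (auto simp: add.assoc)
  also have "\<dots> = (\<Sum>t\<in>{T0..<T}. exp_gap t) / m + primal0 n d \<phi> x \<sigma> w + lam / 2 * (norm2 d w)^2"
    using m unfolding m_def by (simp add: sum.distrib add_divide_distrib)
  finally show ?thesis unfolding m_def .
qed

lemma mean_exp_gap_le:
  assumes "T0 < T"
  shows "(\<Sum>t\<in>{T0..<T}. exp_gap t) / real (T - T0)
    \<le> real n / s0 / real (T - T0) * suboptimality T0 + K / s0"
proof -
  have m: "real (T - T0) > 0" using assms by simp
  have "(\<Sum>t\<in>{T0..<T}. exp_gap t) = real n / s0 * (s0 / real n * (\<Sum>t\<in>{T0..<T}. exp_gap t))"
    using s0_pos n_real_pos by simp
  also have "\<dots> \<le> real n / s0 * (suboptimality T0 + real (T - T0) * K / real n)"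
    using sum_exp_gap_le[of T0 T] assms s0_pos n_real_pos by (intro mult_left_mono) auto
  also have "\<dots> = real n / s0 * suboptimality T0 + real (T - T0) * (K / s0)"
    using s0_pos n_real_pos by (simp add: field_simps)
  finally have "(\<Sum>t\<in>{T0..<T}. exp_gap t) / real (T - T0)
      \<le> (real n / s0 * suboptimality T0 + real (T - T0) * (K / s0)) / real (T - T0)"
    using m by (intro divide_right_mono) auto
  then show ?thesis using m by (simp add: add_divide_distrib)
qed

lemma mean_exp_gap_small:
  assumes loss0: "(\<Sum>i<n. \<phi> i 0) / real n \<le> 1" and T0: "T0 < T"
    and m: "2 * (real n / s0) \<le> real (T - T0)"
    and decay: "exp (- (s0 / real n * real T0)) \<le> e / 4" and K: "K / s0 \<le> e / 4"
  shows "(\<Sum>t\<in>{T0..<T}. exp_gap t) / real (T - T0) \<le> e / 2"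
proof -
  have sub: "suboptimality T0 \<le> e / 2"
    using suboptimality_exp_bound[OF loss0, of T0] decay K by linarith
  have "real n / s0 / real (T - T0) \<le> real (T - T0) / 2 / real (T - T0)"
    using m by (intro divide_right_mono) (simp_all add: mult.commute)
  also have "\<dots> = 1 / 2" using T0 by simp
  finally have "real n / s0 / real (T - T0) * suboptimality T0 \<le> 1 / 2 * (e / 2)"
    using sub suboptimality_nonneg s0_pos by (intro mult_mono) auto
  from add_mono[OF this K]
  have "real n / s0 / real (T - T0) * suboptimality T0 + K / s0 \<le> e / 2" by simp
  then show ?thesis by (rule order_trans[OF mean_exp_gap_le[OF T0]])
qed

end

context sdca
begin

lemma smooth_sdca_run:
  assumes \<gamma>: "\<gamma> > 0" and smooth: "\<forall>i<n. smooth_loss \<gamma> (\<phi> i)" and R: "\<forall>i<n. norm2 d (x i) \<le> R"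
    and step: "\<forall>\<alpha> i. i < n \<longrightarrow> step_ok \<phi> d n lam \<sigma> x R \<gamma> True \<alpha> i (upd \<alpha> i)"
  shows "sdca_run n d \<phi> x \<sigma> lam upd (lam * real n * \<gamma> / (R^2 + lam * real n * \<gamma>)) 0"
proof unfold_locales
  define s where "s = lam * real n * \<gamma> / (R^2 + lam * real n * \<gamma>)"
  have "lam * real n * \<gamma> > 0" using lam_pos n_real_pos \<gamma> by simp
  then show s: "0 < s" "s \<le> 1" unfolding s_def by (auto simp: add_nonneg_pos)
  fix \<alpha> i assume feas: "dual_feasible \<alpha>" and i: "i < n"
  have "dual_feasible (\<alpha>(i := \<alpha> i + upd \<alpha> i)) \<and> (\<exists>u. (if active i then is_subgrad (\<phi> i) (margin \<alpha> i) (- u) else u = \<alpha> i)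
    \<and> gain_bound \<gamma> (R^2) (lam * real n) (loss_gap \<alpha> i) (u - \<alpha> i) s \<le> real n * (dual (\<alpha>(i := \<alpha> i + upd \<alpha> i)) - dual \<alpha>))"
    by (rule step_bound[OF feas i]) (use step i R smooth \<gamma> s in \<open>auto simp: s_def\<close>)
  then show "dual_feasible (\<alpha>(i := \<alpha> i + upd \<alpha> i)) \<and>
      s * loss_gap \<alpha> i - 0 \<le> real n * (dual (\<alpha>(i := \<alpha> i + upd \<alpha> i)) - dual \<alpha>)"
    using gain_bound_balanced[of "lam * real n" \<gamma> R] lam_pos n_real_pos \<gamma> unfolding s_def by auto
qed simp

lemma lipschitz_sdca_run:
  assumes lip: "\<forall>i<n. lipschitz_loss L (\<phi> i)" and R: "\<forall>i<n. norm2 d (x i) \<le> R"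
    and step: "\<forall>\<alpha> i. i < n \<longrightarrow> step_ok \<phi> d n lam \<sigma> x R 0 False \<alpha> i (upd \<alpha> i)" and s: "0 < s" "s \<le> 1"
  shows "sdca_run n d \<phi> x \<sigma> lam upd s (s^2 * (4 * L^2 * R^2) / (2 * (lam * real n)))"
proof unfold_locales
  fix \<alpha> i assume feas: "dual_feasible \<alpha>" and i: "i < n"
  have "dual_feasible (\<alpha>(i := \<alpha> i + upd \<alpha> i)) \<and> (\<exists>u. (if active i then is_subgrad (\<phi> i) (margin \<alpha> i) (- u) else u = \<alpha> i)
    \<and> gain_bound 0 (R^2) (lam * real n) (loss_gap \<alpha> i) (u - \<alpha> i) s \<le> real n * (dual (\<alpha>(i := \<alpha> i + upd \<alpha> i)) - dual \<alpha>))"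
    by (rule step_bound[OF feas i]) (use step i R s in auto)
  then obtain u where feas': "dual_feasible (\<alpha>(i := \<alpha> i + upd \<alpha> i))"
    and u: "if active i then is_subgrad (\<phi> i) (margin \<alpha> i) (- u) else u = \<alpha> i"
    and gain: "gain_bound 0 (R^2) (lam * real n) (loss_gap \<alpha> i) (u - \<alpha> i) s
      \<le> real n * (dual (\<alpha>(i := \<alpha> i + upd \<alpha> i)) - dual \<alpha>)" by blast
  have L: "L \<ge> 0" using lip i lipschitz_loss_nonneg by blast
  have "\<bar>u - \<alpha> i\<bar> \<le> 2 * L"
  proof (cases "active i")
    case True
    have "\<bar>- u\<bar> \<le> L" using lipschitz_subgrad_bound lip i u True by fastforce
    moreover have "\<bar>- \<alpha> i\<bar> \<le> L"
      using lipschitz_fconj_dom lip i feas True unfolding dual_feasible_def by fastforce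
    ultimately show ?thesis by linarith
  qed (use u L in auto)
  then show "dual_feasible (\<alpha>(i := \<alpha> i + upd \<alpha> i)) \<and> s * loss_gap \<alpha> i - s^2 * (4 * L^2 * R^2) / (2 * (lam * real n))
      \<le> real n * (dual (\<alpha>(i := \<alpha> i + upd \<alpha> i)) - dual \<alpha>)"
    using gain_bound_lipschitz[where M = "lam * real n" and c = "R^2" and z = "u - \<alpha> i" and s = s
        and G = "loss_gap \<alpha> i"] lam_pos n_real_pos feas' gain by fastforce
qed (use s lam_pos n_real_pos in auto)

end

section \<open>Iteration counts\<close>

lemma exp_neg_le_of_log_bound:
  fixes K e S T :: real
  assumes K: "K > 0" and e: "e > 0" and S: "S \<ge> 1" and pow: "1 / e \<le> S ^ k"
    and T: "real k * K * ln S \<le> T"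
  shows "exp (- (T / K)) \<le> e"
proof -
  have "ln (1 / e) \<le> ln (S ^ k)"
    using pow e S by (subst ln_le_cancel_iff) auto
  also have "\<dots> = real k * ln S" using S by (simp add: ln_realpow)
  also have "\<dots> \<le> T / K" using T K by (simp add: field_simps)
  finally have "- (T / K) \<le> ln e" using e by (simp add: ln_div)
  then show ?thesis using e by (metis exp_le_cancel_iff exp_ln)
qed

lemma smooth_iterations_suffice:
  fixes S n R B \<epsilon> \<gamma> T :: real
  assumes S: "S \<ge> 2" and n: "0 < n" "n \<le> S" and R: "0 \<le> R" "R \<le> S" and B: "0 \<le> B" "B \<le> S"
    and \<epsilon>: "\<epsilon> > 0" "1 / \<epsilon> \<le> S" and \<gamma>: "\<gamma> > 0" "1 / \<gamma> \<le> S"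
    and T: "10 * (n + R^2 * B^2 / (\<epsilon> * \<gamma>)) * ln S \<le> T"
  shows "exp (- (T / (n + R^2 * B^2 / (\<epsilon> * \<gamma>)))) \<le> \<epsilon> / (2 * (n + R^2 * B^2 / (\<epsilon> * \<gamma>)))"
proof (rule exp_neg_le_of_log_bound[where k = 9])
  define K where "K = n + R^2 * B^2 / (\<epsilon> * \<gamma>)"
  have "n * (1 / \<epsilon>) \<le> S * S" using n \<epsilon> by (intro mult_mono) auto
  also have "\<dots> \<le> S^7" using S by (simp add: power2_eq_square[symmetric] power_increasing)
  finally have a: "n * (1 / \<epsilon>) \<le> S^7" .
  have b: "R^2 * B^2 * (1 / \<epsilon>)^2 * (1 / \<gamma>) \<le> S^2 * S^2 * S^2 * S"
    using R B \<epsilon> \<gamma> by (intro mult_mono power_mono) auto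
  have "4 * S^7 \<le> S^2 * S^7" using S power_mono[of 2 S 2] by (intro mult_right_mono) auto
  moreover have "1 / (\<epsilon> / (2 * K)) = 2 * (n * (1 / \<epsilon>)) + 2 * (R^2 * B^2 * (1 / \<epsilon>)^2 * (1 / \<gamma>))"
    unfolding K_def using \<epsilon> \<gamma> by (simp add: power2_eq_square field_simps)
  ultimately show "1 / (\<epsilon> / (2 * K)) \<le> S^9" using a b by (simp add: power_add[symmetric] numeral_eq_Suc)
  have K: "K > 0" unfolding K_def using n \<epsilon> \<gamma> by (simp add: add_pos_nonneg)
  then show "0 < K" "0 < \<epsilon> / (2 * K)" using \<epsilon> by auto
  have "0 \<le> K * ln S" using K S by simp
  then show "real 9 * K * ln S \<le> T" using T unfolding K_def[symmetric] by simp
qed (use S in simp)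

lemma lipschitz_iterations_suffice:
  fixes K1 K2 S \<epsilon> :: real
  assumes K: "0 < K1" "K1 \<le> 8 * K2" "K2 \<ge> 1" and S: "S \<ge> 2" "1 / \<epsilon> \<le> S" and \<epsilon>: "\<epsilon> > 0"
    and T: "100 * K2 * ln S \<le> real T"
  shows "2 * K1 \<le> real (T - T div 2)" and "exp (- (real (T div 2) / K1)) \<le> \<epsilon> / 4"
proof -
  have "ln (2::real) \<ge> 1 / 2" using ln_diff_le[of 1 2] by simp
  moreover have "ln 2 \<le> ln S" using S(1) by simp
  ultimately have lnS: "ln S \<ge> 1 / 2" by linarith
  have h: "real T \<le> 2 * real (T div 2) + 1" "2 * real (T div 2) \<le> real T"
    by linarith+
  have X: "K2 * ln S \<ge> 1 / 2" using K lnS mult_mono[of 1 K2 "1/2" "ln S"] by simp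
  have "K2 / 2 \<le> K2 * ln S" using K lnS mult_left_mono[OF lnS, of K2] by simp
  moreover have "100 * (K2 * ln S) \<le> real T" using T by (simp add: mult.assoc)
  moreover have "real (T - T div 2) = real T - real (T div 2)" by (simp add: of_nat_diff)
  ultimately show "2 * K1 \<le> real (T - T div 2)" using h K by linarith
  show "exp (- (real (T div 2) / K1)) \<le> \<epsilon> / 4"
  proof (rule exp_neg_le_of_log_bound[where S = S and k = 3])
    have "4 * (1 / \<epsilon>) \<le> S^2 * S" using S power_mono[of 2 S 2] \<epsilon> by (intro mult_mono) auto
    then show "1 / (\<epsilon> / 4) \<le> S ^ 3" by (simp add: power_Suc2[symmetric] del: power_Suc2)
    have "K1 * ln S \<le> 8 * K2 * ln S" using K lnS by (intro mult_right_mono) auto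
    then show "real 3 * K1 * ln S \<le> real (T div 2)" using h T X by simp
  qed (use K S \<epsilon> in auto)
qed

lemma smooth_rate:
  fixes n d :: nat and \<phi> :: "nat \<Rightarrow> real \<Rightarrow> real" and x :: "nat \<Rightarrow> nat \<Rightarrow> real"
    and \<sigma> \<epsilon> B R \<gamma> :: real and wstar :: "nat \<Rightarrow> real" and upd :: "(nat \<Rightarrow> real) \<Rightarrow> nat \<Rightarrow> real" and T :: nat
  assumes n: "n \<ge> 1" and \<sigma>: "\<sigma> > 0" and \<epsilon>: "\<epsilon> > 0" and \<gamma>: "\<gamma> > 0"
    and loss: "\<forall>i<n. convex_on UNIV (\<phi> i) \<and> (\<forall>a. \<phi> i a \<ge> 0) \<and> smooth_loss \<gamma> (\<phi> i)"
    and loss0: "(\<Sum>i<n. \<phi> i 0) / real n \<le> 1" and B: "B > 0" and wstar: "norm2 d wstar \<le> B"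
    and R: "\<forall>i<n. norm2 d (x i) \<le> R"
    and step: "\<forall>\<alpha> i. i < n \<longrightarrow> step_ok \<phi> d n (\<epsilon> / B^2) \<sigma> x R \<gamma> True \<alpha> i (upd \<alpha> i)"
    and T: "real T \<ge> 10 * (real n + R^2 * B^2 / (\<epsilon> * \<gamma>))
                 * ln (2 + real n + \<epsilon> + 1/\<epsilon> + R + 1/R + B + 1/B + \<gamma> + 1/\<gamma>)"
  shows "expect n T (\<lambda>is. primal0 n d \<phi> x \<sigma> (wof n (\<epsilon> / B^2) \<sigma> x (alphas upd is T)))
            - primal0 n d \<phi> x \<sigma> wstar \<le> \<epsilon>"
proof -
  define lam where "lam = \<epsilon> / B^2"
  define s where "s = lam * real n * \<gamma> / (R^2 + lam * real n * \<gamma>)"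
  define K0 where "K0 = real n + R^2 * B^2 / (\<epsilon> * \<gamma>)"
  interpret sdca n d \<phi> x \<sigma> lam
    by unfold_locales (use n \<sigma> \<epsilon> B loss in \<open>auto simp: lam_def\<close>)
  interpret sdca_run n d \<phi> x \<sigma> lam upd s 0
    unfolding s_def by (rule smooth_sdca_run) (use \<gamma> loss R step in \<open>auto simp: lam_def\<close>)
  have R0: "R \<ge> 0" using R n norm2_nonneg[of d "x 0"] by force
  have K0: "real n / s = K0" "K0 > 0"
    unfolding K0_def s_def lam_def using n_real_pos \<epsilon> B \<gamma> by (auto simp: field_simps add_pos_nonneg)
  have "exp_gap T \<le> K0 * suboptimality T"
    using exp_gap_le_suboptimality[of T] s0_pos K0 by (simp add: field_simps)
  also have "\<dots> \<le> K0 * exp (- (real T / K0))"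
  proof -
    have "s / real n * real T = real T / K0" using K0(1)[symmetric] s0_pos n_real_pos by simp
    then show ?thesis using suboptimality_exp_bound[OF loss0, of T] K0 by (intro mult_left_mono) auto
  qed
  also have "\<dots> \<le> K0 * (\<epsilon> / (2 * K0))"
    unfolding K0_def using smooth_iterations_suffice[OF _ _ _ R0 _ _ _ \<epsilon>(1) _ \<gamma> _ T] K0(2) R0 \<epsilon> B \<gamma> n_real_pos
    by (intro mult_left_mono) (auto simp: K0_def)
  finally have "exp_gap T \<le> \<epsilon> / 2" using K0 by simp
  then have "expect n T (\<lambda>is. primal0 n d \<phi> x \<sigma> (wof n lam \<sigma> x (alphas upd is T)))
      - primal0 n d \<phi> x \<sigma> wstar \<le> \<epsilon>"
    using expect_primal_le[of T wstar, unfolded w_of_def] regularization_bias[OF \<epsilon> B wstar, folded lam_def]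
    by linarith
  then show ?thesis unfolding lam_def .
qed

lemma lipschitz_rate:
  fixes n d :: nat and \<phi> :: "nat \<Rightarrow> real \<Rightarrow> real" and x :: "nat \<Rightarrow> nat \<Rightarrow> real"
    and \<sigma> \<epsilon> B R L :: real and wstar :: "nat \<Rightarrow> real" and upd :: "(nat \<Rightarrow> real) \<Rightarrow> nat \<Rightarrow> real" and T :: nat
  assumes n: "n \<ge> 1" and \<sigma>: "\<sigma> > 0" and \<epsilon>: "\<epsilon> > 0"
    and loss: "\<forall>i<n. convex_on UNIV (\<phi> i) \<and> (\<forall>a. \<phi> i a \<ge> 0) \<and> lipschitz_loss L (\<phi> i)"
    and loss0: "(\<Sum>i<n. \<phi> i 0) / real n \<le> 1" and B: "B > 0" and wstar: "norm2 d wstar \<le> B"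
    and R: "\<forall>i<n. norm2 d (x i) \<le> R"
    and step: "\<forall>\<alpha> i. i < n \<longrightarrow> step_ok \<phi> d n (\<epsilon> / B^2) \<sigma> x R 0 False \<alpha> i (upd \<alpha> i)"
    and T: "real T \<ge> 100 * (real n + L^2 * R^2 * B^2 / \<epsilon>^2)
                 * ln (2 + real n + \<epsilon> + 1/\<epsilon> + R + 1/R + B + 1/B + L + 1/L)"
  shows "expect n T (\<lambda>is. primal0 n d \<phi> x \<sigma> (wavg n (\<epsilon> / B^2) \<sigma> x upd is (T div 2) T))
            - primal0 n d \<phi> x \<sigma> wstar \<le> \<epsilon>"
proof -
  define lam where "lam = \<epsilon> / B^2"
  define G where "G = 4 * L^2 * R^2"
  define s where "s = lam * real n * \<epsilon> / (lam * real n * \<epsilon> + 2 * G)"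
  define K where "K = s^2 * G / (2 * (lam * real n))"
  define X where "X = L^2 * R^2 * B^2 / \<epsilon>^2"
  define S where "S = 2 + real n + \<epsilon> + 1/\<epsilon> + R + 1/R + B + 1/B + L + 1/L"
  define T0 where "T0 = T div 2"
  interpret sdca n d \<phi> x \<sigma> lam
    by unfold_locales (use n \<sigma> \<epsilon> B loss in \<open>auto simp: lam_def\<close>)
  have L: "L \<ge> 0" using loss n lipschitz_loss_nonneg by auto
  have R0: "R \<ge> 0" using R n norm2_nonneg[of d "x 0"] by force
  have s: "0 < s" "s \<le> 1" "s * G / (2 * (lam * real n)) \<le> \<epsilon> / 4"
    using lipschitz_step_size[of "lam * real n" \<epsilon> G] lam_pos n_real_pos \<epsilon>
    unfolding s_def G_def by (auto simp: mult.assoc)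
  interpret sdca_run n d \<phi> x \<sigma> lam upd s K
    unfolding K_def G_def by (rule lipschitz_sdca_run) (use loss R step s in \<open>auto simp: lam_def\<close>)
  have "real n / s = real n * (lam * real n * \<epsilon> + 2 * G) / (lam * real n * \<epsilon>)"
    unfolding s_def using s(1) lam_pos n_real_pos \<epsilon> by simp
  also have "\<dots> = real n + 8 * X"
    unfolding X_def G_def lam_def using n_real_pos \<epsilon> B by (simp add: power2_eq_square field_simps)
  finally have ratio: "real n / s = real n + 8 * X" .
  have "X \<ge> 0" unfolding X_def by simp
  moreover have "100 * (real n + X) * ln S \<le> real T" using T unfolding X_def S_def .
  moreover have "S \<ge> 2" "1 / \<epsilon> \<le> S" unfolding S_def using \<epsilon> R0 B L by auto
  ultimately have iter: "2 * (real n / s) \<le> real (T - T0)" "exp (- (real T0 / (real n / s))) \<le> \<epsilon> / 4"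
    using lipschitz_iterations_suffice[of "real n + 8 * X" "real n + X" S \<epsilon> T] n \<epsilon>
    unfolding ratio T0_def by auto
  have "0 < 2 * (real n / s)" using s(1) n_real_pos by simp
  then have T0: "T0 < T" using iter(1) by linarith
  have Ks: "K / s \<le> \<epsilon> / 4" unfolding K_def using s by (simp add: power2_eq_square)
  define g where "g = (\<Sum>t\<in>{T0..<T}. exp_gap t) / real (T - T0)"
  have "g \<le> \<epsilon> / 2"
    unfolding g_def using iter T0 Ks s(1) n_real_pos
    by (intro mean_exp_gap_small[OF loss0]) (auto simp: field_simps)
  then have "expect n T (\<lambda>is. primal0 n d \<phi> x \<sigma> (wavg n lam \<sigma> x upd is T0 T))
      - primal0 n d \<phi> x \<sigma> wstar \<le> \<epsilon>"
    using expect_primal_mean_le[OF T0, of wstar, folded g_def]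
      regularization_bias[OF \<epsilon> B wstar, folded lam_def] by linarith
  then show ?thesis unfolding lam_def T0_def .
qed

theorem corollary1:
  shows
  "(\<exists>C>0. \<forall>(n::nat) (d::nat) (\<phi>::nat \<Rightarrow> real \<Rightarrow> real) (x::nat \<Rightarrow> nat \<Rightarrow> real)
        (\<sigma>::real) (\<epsilon>::real) (B::real) (R::real) (\<gamma>::real) (wstar::nat \<Rightarrow> real)
        (upd::(nat \<Rightarrow> real) \<Rightarrow> nat \<Rightarrow> real) (T::nat).
      n \<ge> 1 \<and> \<sigma> > 0 \<and> \<epsilon> > 0 \<and> \<gamma> > 0 \<and>
      (\<forall>i<n. convex_on UNIV (\<phi> i) \<and> (\<forall>a. \<phi> i a \<ge> 0) \<and> smooth_loss \<gamma> (\<phi> i)) \<and>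
      (\<Sum>i<n. \<phi> i 0) / real n \<le> 1 \<and>
      (\<forall>w. primal0 n d \<phi> x \<sigma> wstar \<le> primal0 n d \<phi> x \<sigma> w) \<and>
      B > 0 \<and> norm2 d wstar \<le> B \<and> (\<forall>i<n. norm2 d (x i) \<le> R) \<and>
      (\<forall>\<alpha> i. i < n \<longrightarrow> step_ok \<phi> d n (\<epsilon> / B^2) \<sigma> x R \<gamma> True \<alpha> i (upd \<alpha> i)) \<and>
      real T \<ge> C * (real n + R^2 * B^2 / (\<epsilon> * \<gamma>))
                 * ln (2 + real n + \<epsilon> + 1/\<epsilon> + R + 1/R + B + 1/B + \<gamma> + 1/\<gamma>)
      \<longrightarrow> expect n T (\<lambda>is. primal0 n d \<phi> x \<sigma> (wof n (\<epsilon> / B^2) \<sigma> x (alphas upd is T)))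
            - primal0 n d \<phi> x \<sigma> wstar \<le> \<epsilon>)
 \<and> (\<exists>C>0. \<forall>(n::nat) (d::nat) (\<phi>::nat \<Rightarrow> real \<Rightarrow> real) (x::nat \<Rightarrow> nat \<Rightarrow> real)
        (\<sigma>::real) (\<epsilon>::real) (B::real) (R::real) (L::real) (wstar::nat \<Rightarrow> real)
        (upd::(nat \<Rightarrow> real) \<Rightarrow> nat \<Rightarrow> real) (T::nat).
      n \<ge> 1 \<and> \<sigma> > 0 \<and> \<epsilon> > 0 \<and>
      (\<forall>i<n. convex_on UNIV (\<phi> i) \<and> (\<forall>a. \<phi> i a \<ge> 0) \<and> lipschitz_loss L (\<phi> i)) \<and>
      (\<Sum>i<n. \<phi> i 0) / real n \<le> 1 \<and>
      (\<forall>w. primal0 n d \<phi> x \<sigma> wstar \<le> primal0 n d \<phi> x \<sigma> w) \<and>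
      B > 0 \<and> norm2 d wstar \<le> B \<and> (\<forall>i<n. norm2 d (x i) \<le> R) \<and>
      (\<forall>\<alpha> i. i < n \<longrightarrow> step_ok \<phi> d n (\<epsilon> / B^2) \<sigma> x R 0 False \<alpha> i (upd \<alpha> i)) \<and>
      real T \<ge> C * (real n + L^2 * R^2 * B^2 / \<epsilon>^2)
                 * ln (2 + real n + \<epsilon> + 1/\<epsilon> + R + 1/R + B + 1/B + L + 1/L)
      \<longrightarrow> expect n T (\<lambda>is. primal0 n d \<phi> x \<sigma> (wavg n (\<epsilon> / B^2) \<sigma> x upd is (T div 2) T))
            - primal0 n d \<phi> x \<sigma> wstar \<le> \<epsilon>)"
  apply (rule conjI)
  subgoal by (intro exI[of _ "10::real"] conjI allI impI) (auto intro: smooth_rate)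
  subgoal by (intro exI[of _ "100::real"] conjI allI impI) (auto intro: lipschitz_rate)
  done

end
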